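(* Let $p\ge2$, $f\in\mathcal H_0$, $u$ the solution of $\partial_tu+\partial J(u)\ni0$, $u(0)=f$, $\lambda:=\lambda_1\|f\|^{p-2}$, $a(t)=(1+(p-2)\lambda t)^{-\frac1{p-2}}$ if $p>2$ and $a(t)=e^{-\lambda t}$ if $p=2$, and $w(t):=u(t)/a(t)$. Let $w_*$ be an asymptotic profile, i.e. $w_*\in\mathcal H$ with $w(t_k)\to w_*$ strongly for some sequence $t_k\to\infty$. If $p=2$, then $w_*$ is a non-trivial ground state or $w_*=0$. If $p>2$, then $\|w_*\|\le\|f\|$, with equality if and only if $w_*$ is a ground state.
   Context: $\mathcal H$ is a real Hilbert space with inner product $\langle\cdot,\cdot\rangle$ and norm $\|\cdot\|$. $J:\mathcal H\to\mathbb R\cup\{\infty\}$ is convex, lower semicontinuous, proper, with dense effective domain, and absolutely $p$-homogeneous: $J(cu)=|c|^pJ(u)$ for $c\ne0$, $J(0)=0$. $\partial J(u)=\{\zeta: J(u)+\langle\zeta,v-u\rangle\le J(v)\ \forall v\}$; $\mathcal N(J)=\{u:J(u)=0\}$; $\mathcal H_0:=\mathcal N(J)^\perp\setminus\{0\}$. Rayleigh quotient $R(u):=pJ(u)/\|u\|^p$; standing coercivity assumption $\lambda_1:=\inf_{u\in\mathcal H_0}R(u)>0$; a ground state is a minimizer of $R$ over $\mathcal H_0$. The gradient flow solution (Brezis) is the unique continuous $u:[0,\infty)\to\mathcal H$, Lipschitz on $[\delta,\infty)$ for all $\delta>0$, right-differentiable on $(0,\infty)$ with $u(0)=f$ and $\partial_t^+u(t)=-\zeta(t)$,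 $\zeta(t)$ the minimal-norm element of $\partial J(u(t))$. The function $a$ solves $a'=-\lambda a^{p-1}$, $a(0)=1$. *)

theory Defs
  imports "HOL-Analysis.Analysis" "HOL-Library.Extended_Real"
begin

text \<open>Functionals J : H -> R \<union> {\<infinity>} are modelled as ereal-valued functions that never take -\<infinity>.\<close>

definition proper_fun :: "('a \<Rightarrow> ereal) \<Rightarrow> bool" where
  "proper_fun J \<longleftrightarrow> (\<forall>u. J u \<noteq> -\<infinity>) \<and> (\<exists>u. J u \<noteq> \<infinity>)"

definition convex_fun :: "('a::real_vector \<Rightarrow> ereal) \<Rightarrow> bool" where
  "convex_fun J \<longleftrightarrow> (\<forall>x y. \<forall>t::real. 0 < t \<and> t < 1 \<longrightarrow>
      J ((1 - t) *\<^sub>R x + t *\<^sub>R y) \<le> ereal (1 - t) * J x + ereal t * J y)"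

definition lsc_fun :: "('a::topological_space \<Rightarrow> ereal) \<Rightarrow> bool" where
  "lsc_fun J \<longleftrightarrow> (\<forall>c. closed {u. J u \<le> c})"

definition eff_dom :: "('a \<Rightarrow> ereal) \<Rightarrow> 'a set" where
  "eff_dom J = {u. J u \<noteq> \<infinity>}"

definition abs_homogeneous :: "real \<Rightarrow> ('a::real_vector \<Rightarrow> ereal) \<Rightarrow> bool" where
  "abs_homogeneous p J \<longleftrightarrow> J 0 = 0 \<and>
      (\<forall>c u. c \<noteq> 0 \<longrightarrow> J (c *\<^sub>R u) = ereal (\<bar>c\<bar> powr p) * J u)"

definition subdiff :: "('a::real_inner \<Rightarrow> ereal) \<Rightarrow> 'a \<Rightarrow> 'a set" where
  "subdiff J u = {\<zeta>. \<forall>v. J u + ereal (inner \<zeta> (v - u)) \<le> J v}"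

definition null_set :: "('a \<Rightarrow> ereal) \<Rightarrow> 'a set" where
  "null_set J = {u. J u = 0}"

definition H0 :: "('a::real_inner \<Rightarrow> ereal) \<Rightarrow> 'a set" where
  "H0 J = {x. \<forall>y\<in>null_set J. inner x y = 0} - {0}"

definition rayleigh :: "real \<Rightarrow> ('a::real_normed_vector \<Rightarrow> ereal) \<Rightarrow> 'a \<Rightarrow> ereal" where
  "rayleigh p J u = ereal p * J u / ereal (norm u powr p)"

definition lambda1 :: "real \<Rightarrow> ('a::real_inner \<Rightarrow> ereal) \<Rightarrow> ereal" where
  "lambda1 p J = (INF u\<in>H0 J. rayleigh p J u)"

definition ground_state :: "real \<Rightarrow> ('a::real_inner \<Rightarrow> ereal) \<Rightarrow> 'a \<Rightarrow> bool" where
  "ground_state p J w \<longleftrightarrow> w \<in> H0 J \<and> rayleigh p J w = lambda1 p J"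

definition min_norm_subgrad :: "('a::real_inner \<Rightarrow> ereal) \<Rightarrow> 'a \<Rightarrow> 'a \<Rightarrow> bool" where
  "min_norm_subgrad J x z \<longleftrightarrow> z \<in> subdiff J x \<and> (\<forall>\<eta>\<in>subdiff J x. norm z \<le> norm \<eta>)"

text \<open>Brezis gradient flow solution of u' + dJ(u) \<ni> 0, u(0) = f.\<close>
definition gradient_flow :: "('a::real_inner \<Rightarrow> ereal) \<Rightarrow> 'a \<Rightarrow> (real \<Rightarrow> 'a) \<Rightarrow> bool" where
  "gradient_flow J f u \<longleftrightarrow>
     continuous_on {0..} u \<and> u 0 = f \<and>
     (\<forall>\<delta>>0. \<exists>L. L-lipschitz_on {\<delta>..} u) \<and>
     (\<forall>t>0. \<exists>z. min_norm_subgrad J (u t) z \<and> (u has_vector_derivative (- z)) (at_right t))"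

definition profile_a :: "real \<Rightarrow> real \<Rightarrow> real \<Rightarrow> real" where
  "profile_a p lam t = (if p = 2 then exp (- lam * t)
                        else (1 + (p - 2) * lam * t) powr (- 1 / (p - 2)))"

end

(*
  Along the flow u' = -zeta, with zeta(t) the minimal-norm subgradient of J at u(t), the Rayleigh
  quotient R(t) of u(t) decreases to a limit R_inf >= lambda_1, and R is the derivative of
  Phi = |u|^(2-p)/(p-2) (of -ln |u| if p = 2), so Phi(t)/t -> R_inf.  For p > 2 this gives
  |w(t)|^(2-p) -> R_inf/lambda, hence |w_*| <= |f| with equality iff R_inf = lambda_1; for p = 2 it
  gives ln |w(t)| / t -> lambda_1 - R_inf, so R_inf = lambda_1 unless w_* = 0.  If R_inf = lambda_1,
  lower semicontinuity of J makes w_* a ground state.  Conversely, if w_* is a ground state, the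
  monotonicity of the subdifferential keeps the flow as close to the explicit separable solution
  through (a multiple of) w_* as it was initially, and this forces |w_*| = |f|.
  The monotonicity of R rests on the energy identity d/dt J(u) = -|zeta|^2, which needs the weak right
  continuity of zeta; it is obtained from nested convex sets of epsilon-subgradients, in place of weak
  compactness.
*)

theory Submission
  imports Defs
begin

section \<open>Right derivatives and dissipative curves\<close>

lemma right_deriv_nonneg_imp_le_Ico:
  fixes f f' :: "real \<Rightarrow> real"
  assumes "c \<le> b" "continuous_on {c..b} f"
    and "\<And>t. c \<le> t \<Longrightarrow> t < b \<Longrightarrow> (f has_real_derivative f' t) (at_right t)"
    and "\<And>t. c \<le> t \<Longrightarrow> t < b \<Longrightarrow> f' t \<ge> 0"
  shows "f c \<le> f b"
proof -
  have slope: "f c - f b \<le> e * (b - c)" if e: "e > 0" for e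
  proof -
    define g where "g t = f t + e * t" for t
    define M where "M = {c..b} \<inter> g -` {g c..}"
    have "closed M" unfolding M_def g_def
      by (intro continuous_closed_preimage continuous_intros assms(2))
    have "c \<in> M" "bdd_above M" using assms(1) by (auto simp: M_def)
    define s where "s = Sup M"
    have "s \<in> M" unfolding s_def using \<open>closed M\<close> \<open>c \<in> M\<close> \<open>bdd_above M\<close>
      by (intro closed_contains_Sup) auto
    \<comment> \<open>Right after a time \<open>s < b\<close> in \<open>M\<close>, \<open>g\<close> rises further, so \<open>Sup M\<close> can only be \<open>b\<close>.\<close>
    have "s = b"
    proof (rule ccontr)
      assume "s \<noteq> b"
      with \<open>s \<in> M\<close> have sb: "c \<le> s" "s < b" by (auto simp: M_def)
      have "(g has_real_derivative f' s + e) (at_right s)"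
        unfolding g_def by (auto intro!: derivative_eq_intros assms(3) sb)
      moreover have "f' s + e > 0" using assms(4)[OF sb] e by simp
      ultimately have "eventually (\<lambda>y. (g y - g s) / (y - s) > 0) (at_right s)"
        unfolding has_field_derivative_iff by (rule order_tendstoD)
      moreover have "eventually (\<lambda>y. s < y \<and> y < b) (at_right s)"
        using sb(2) by (auto simp: eventually_at_right_field intro!: exI[of _ b])
      ultimately obtain y where y: "(g y - g s) / (y - s) > 0" "s < y" "y < b"
        using eventually_happens' eventually_conj
        by (metis (mono_tags, lifting) trivial_limit_at_right_real)
      then have "y \<in> M" using \<open>s \<in> M\<close> sb by (auto simp: M_def zero_less_divide_iff)
      then have "y \<le> s" unfolding s_def using \<open>bdd_above M\<close> by (rule cSup_upper)
      with y show False by simp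
    qed
    with \<open>s \<in> M\<close> show ?thesis by (auto simp: M_def g_def algebra_simps)
  qed
  have "f c \<le> f b + e" if "e > 0" for e
  proof (cases "c = b")
    case False
    with assms(1) have "b - c > 0" by simp
    with slope[of "e / (b - c)"] that show ?thesis by simp
  qed (use that in simp)
  then show ?thesis by (rule field_le_epsilon)
qed

lemma right_deriv_lower_bound:
  fixes f f' :: "real \<Rightarrow> real"
  assumes "a \<le> b" "continuous_on {a..b} f"
    and "\<And>t. a < t \<Longrightarrow> t < b \<Longrightarrow> (f has_real_derivative f' t) (at_right t)"
    and "\<And>t. a < t \<Longrightarrow> t < b \<Longrightarrow> m \<le> f' t"
  shows "m * (b - a) \<le> f b - f a"
proof (cases "a = b")
  case False
  with assms(1) have ab: "a < b" by simp
  define g where "g t = f t - m * t" for t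
  have cont: "continuous_on {a..b} g"
    unfolding g_def by (intro continuous_intros assms(2))
  have "g c \<le> g b" if c: "a < c" "c \<le> b" for c
  proof (rule right_deriv_nonneg_imp_le_Ico[of c b g "\<lambda>t. f' t - m"])
    show "continuous_on {c..b} g" using c by (intro continuous_on_subset[OF cont]) auto
    fix t assume "c \<le> t" "t < b"
    with c show "(g has_real_derivative f' t - m) (at_right t)" "0 \<le> f' t - m"
      unfolding g_def by (auto intro!: derivative_eq_intros assms(3,4))
  qed (use c in auto)
  then have "eventually (\<lambda>c. g c \<le> g b) (at_right a)"
    using ab by (auto simp: eventually_at_right_field intro!: exI[of _ b])
  moreover have "(g \<longlongrightarrow> g a) (at_right a)"
    using cont ab by (auto simp: continuous_on_def at_within_Icc_at_right[symmetric])
  ultimately have "g a \<le> g b" by (intro tendsto_upperbound) auto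
  then show ?thesis by (simp add: g_def algebra_simps)
qed simp

lemma right_deriv_upper_bound:
  fixes f f' :: "real \<Rightarrow> real"
  assumes "a \<le> b" "continuous_on {a..b} f"
    and "\<And>t. a < t \<Longrightarrow> t < b \<Longrightarrow> (f has_real_derivative f' t) (at_right t)"
    and "\<And>t. a < t \<Longrightarrow> t < b \<Longrightarrow> f' t \<le> m"
  shows "f b - f a \<le> m * (b - a)"
proof -
  have "- m * (b - a) \<le> - f b - - f a"
    by (rule right_deriv_lower_bound[of a b _ "\<lambda>t. - f' t"])
      (use assms in \<open>auto intro!: continuous_intros derivative_eq_intros\<close>)
  then show ?thesis by simp
qed

lemma has_vector_derivative_inner:
  fixes x y :: "real \<Rightarrow> 'a::real_inner"
  assumes "(x has_vector_derivative x') (at t within S)"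
    and "(y has_vector_derivative y') (at t within S)"
  shows "((\<lambda>s. inner (x s) (y s)) has_real_derivative inner (x t) y' + inner x' (y t))
    (at t within S)"
  unfolding has_field_derivative_def
  using has_derivative_inner[OF assms[unfolded has_vector_derivative_def]]
  by (rule has_derivative_eq_rhs) (auto simp: algebra_simps fun_eq_iff)

lemma has_vector_derivative_imp_tendsto_quotient:
  fixes x :: "real \<Rightarrow> 'a::real_normed_vector"
  assumes "(x has_vector_derivative v) (at t within S)"
  shows "((\<lambda>s. (1 / (s - t)) *\<^sub>R (x s - x t)) \<longlongrightarrow> v) (at t within S)"
proof -
  have "((\<lambda>s. (x s - x t - (s - t) *\<^sub>R v) /\<^sub>R norm (s - t)) \<longlongrightarrow> 0) (at t within S)"
    using assms by (simp add: has_vector_derivative_def has_derivative_at_within)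
  then have "((\<lambda>s. norm ((x s - x t - (s - t) *\<^sub>R v) /\<^sub>R norm (s - t))) \<longlongrightarrow> 0) (at t within S)"
    by (rule tendsto_norm_zero)
  moreover have "eventually (\<lambda>s. norm ((x s - x t - (s - t) *\<^sub>R v) /\<^sub>R norm (s - t)) =
      norm ((1 / (s - t)) *\<^sub>R (x s - x t) - v)) (at t within S)"
    unfolding eventually_at_filter
  proof (intro always_eventually allI impI)
    fix s assume "s \<noteq> t"
    then have "(1 / (s - t)) *\<^sub>R (x s - x t) - v = (1 / (s - t)) *\<^sub>R (x s - x t - (s - t) *\<^sub>R v)"
      by (simp add: scaleR_diff_right)
    then show "norm ((x s - x t - (s - t) *\<^sub>R v) /\<^sub>R norm (s - t)) =
        norm ((1 / (s - t)) *\<^sub>R (x s - x t) - v)" by (simp add: divide_inverse)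
  qed
  ultimately have "((\<lambda>s. norm ((1 / (s - t)) *\<^sub>R (x s - x t) - v)) \<longlongrightarrow> 0) (at t within S)"
    by (rule Lim_transform_eventually)
  then show ?thesis by (simp only: tendsto_norm_zero_iff LIM_zero_iff)
qed

lemma has_vector_derivative_imp_tendsto_increment_quotient:
  fixes x :: "real \<Rightarrow> 'a::real_normed_vector"
  assumes "(x has_vector_derivative v) (at_right t)"
  shows "((\<lambda>h. (1 / h) *\<^sub>R (x (t + h) - x t)) \<longlongrightarrow> v) (at_right 0)"
proof -
  have "((\<lambda>s. (1 / (s - t)) *\<^sub>R (x s - x t)) \<longlongrightarrow> v) (filtermap (\<lambda>h. h + t) (at_right 0))"
    using has_vector_derivative_imp_tendsto_quotient[OF assms]
    by (simp add: at_right_to_0[symmetric])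
  then show ?thesis unfolding filterlim_filtermap by (simp add: add.commute)
qed

lemma has_vector_derivative_at_right_shift:
  fixes x :: "real \<Rightarrow> 'a::real_normed_vector"
  assumes "(x has_vector_derivative v) (at_right (t + h))"
  shows "((\<lambda>s. x (s + h)) has_vector_derivative v) (at_right t)"
proof -
  have "((\<lambda>s. s + h) has_vector_derivative 1) (at t within {t<..})"
    by (auto intro!: derivative_eq_intros simp flip: has_real_derivative_iff_has_vector_derivative)
  moreover have "(\<lambda>s. s + h) ` {t<..} = {t + h<..}"
    by (auto simp: image_iff intro!: bexI[of _ "_ - h"])
  ultimately have "((x \<circ> (\<lambda>s. s + h)) has_vector_derivative (1 *\<^sub>R v)) (at t within {t<..})"
    using assms by (intro vector_diff_chain_within) auto
  then show ?thesis by (simp add: o_def)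
qed

lemma norm_diff_le_if_monotone_velocities:
  fixes x y :: "real \<Rightarrow> 'a::real_inner"
  assumes "t0 \<le> t1" "continuous_on {t0..t1} x" "continuous_on {t0..t1} y"
    and "\<And>t. t0 < t \<Longrightarrow> t < t1 \<Longrightarrow> (x has_vector_derivative - \<xi> t) (at_right t)"
    and "\<And>t. t0 < t \<Longrightarrow> t < t1 \<Longrightarrow> (y has_vector_derivative - \<eta> t) (at_right t)"
    and "\<And>t. t0 < t \<Longrightarrow> t < t1 \<Longrightarrow> inner (\<xi> t - \<eta> t) (x t - y t) \<ge> 0"
  shows "norm (x t1 - y t1) \<le> norm (x t0 - y t0)"
proof -
  define g where "g s = inner (x s - y s) (x s - y s)" for s
  have "g t1 - g t0 \<le> 0 * (t1 - t0)"
  proof (rule right_deriv_upper_bound[of t0 t1 g "\<lambda>t. - 2 * inner (\<xi> t - \<eta> t) (x t - y t)"])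
    fix t assume t: "t0 < t" "t < t1"
    have "((\<lambda>s. x s - y s) has_vector_derivative (- \<xi> t - - \<eta> t)) (at_right t)"
      by (intro has_vector_derivative_diff assms t)
    from has_vector_derivative_inner[OF this this]
    show "(g has_real_derivative - 2 * inner (\<xi> t - \<eta> t) (x t - y t)) (at_right t)"
      unfolding g_def by (simp add: algebra_simps inner_commute)
    show "- 2 * inner (\<xi> t - \<eta> t) (x t - y t) \<le> 0" using assms(6)[OF t] by simp
  qed (use assms in \<open>auto simp: g_def intro!: continuous_intros\<close>)
  then show ?thesis by (simp add: g_def norm_le)
qed

lemma separable_curve_has_vector_derivative:
  fixes h :: "'a::real_normed_vector" and c m s :: real
  assumes v: "v = (\<lambda>s. (1 + c * m * norm h powr c * s) powr (- 1 / c) *\<^sub>R h)"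
    and c: "c > 0" and pos: "1 + c * m * norm h powr c * s > 0"
  shows "(v has_vector_derivative - ((m * norm (v s) powr c) *\<^sub>R v s)) (at s)"
proof -
  define B where "B = 1 + c * m * norm h powr c * s"
  have "((\<lambda>s. 1 + c * m * norm h powr c * s) has_real_derivative c * m * norm h powr c) (at s)"
    by (auto intro!: derivative_eq_intros)
  then have d: "((\<lambda>s. (1 + c * m * norm h powr c * s) powr (- 1 / c)) has_real_derivative
      - 1 / c * B powr (- 1 / c - 1) * (c * m * norm h powr c)) (at s)"
    unfolding B_def
    by (rule DERIV_chain2[where f = "\<lambda>z. z powr (- 1 / c)"
          and g = "\<lambda>s. 1 + c * m * norm h powr c * s", OF has_real_derivative_powr[OF pos]])
  then have "(v has_vector_derivative
      (- 1 / c * B powr (- 1 / c - 1) * (c * m * norm h powr c)) *\<^sub>R h) (at s)"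
    unfolding v using has_vector_derivative_scaleR[OF d has_vector_derivative_const[of h]] by simp
  moreover have "- 1 / c * B powr (- 1 / c - 1) * (c * m * norm h powr c) =
      - (m * norm (v s) powr c * B powr (- 1 / c))"
  proof -
    have B: "B > 0" using pos by (simp add: B_def)
    have "norm (v s) powr c = (B powr (- 1 / c)) powr c * norm h powr c"
      by (simp add: v B_def powr_mult)
    also have "(B powr (- 1 / c)) powr c = B powr (- 1)"
      using c by (simp add: powr_powr)
    finally have v_s: "norm (v s) powr c = norm h powr c / B"
      using B by (simp add: powr_minus_divide)
    have "B powr (- 1 / c - 1) = B powr (- 1 / c) / B"
      using B by (simp add: powr_diff)
    then show ?thesis unfolding v_s using B c by (simp add: field_simps)
  qed
  ultimately show ?thesis by (simp add: v B_def)
qed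

section \<open>Nested convex sets in Hilbert space\<close>

lemma norm_diff_sq_le_if_norm_midpoint_ge:
  fixes y1 y2 :: "'a::real_inner"
  assumes "0 \<le> m" "m \<le> norm ((1/2) *\<^sub>R (y1 + y2))"
  shows "(norm (y1 - y2))^2 \<le> 2 * (norm y1)^2 + 2 * (norm y2)^2 - 4 * m^2"
proof -
  have "(2 * m)^2 \<le> (norm (y1 + y2))^2"
    using assms by (intro power_mono) auto
  moreover have "(norm (y1 - y2))^2 = 2 * (norm y1)^2 + 2 * (norm y2)^2 - (norm (y1 + y2))^2"
    by (simp add: power2_norm_eq_inner inner_add inner_diff inner_commute)
  ultimately show ?thesis by (simp add: power_mult_distrib)
qed

lemma Cauchy_if_dist_le:
  fixes y :: "nat \<Rightarrow> 'a::metric_space"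
  assumes "\<delta> \<longlonglongrightarrow> 0" and "\<And>n k. n \<le> k \<Longrightarrow> dist (y n) (y k) \<le> \<delta> n"
  shows "Cauchy y"
proof (rule metric_CauchyI)
  fix e :: real assume "e > 0"
  with assms(1) have "eventually (\<lambda>n. \<delta> n < e) sequentially" by (rule order_tendstoD)
  then obtain N where N: "\<And>n. n \<ge> N \<Longrightarrow> \<delta> n < e" by (auto simp: eventually_sequentially)
  have "dist (y n) (y k) < e" if "N \<le> n" "N \<le> k" for n k
  proof (cases "n \<le> k")
    case True
    then show ?thesis using assms(2)[OF True] N[OF that(1)] by simp
  next
    case False
    then show ?thesis using assms(2)[of k n] N[OF that(2)] by (simp add: dist_commute)
  qed
  then show "\<exists>N. \<forall>n\<ge>N. \<forall>k\<ge>N. dist (y n) (y k) < e" by blast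
qed

text \<open>In a Hilbert space, a sequence of almost norm-minimal points of nested convex sets is Cauchy
  by the parallelogram law; this replaces weak compactness.\<close>

lemma nested_closed_convex_Inter_nonempty:
  fixes S :: "nat \<Rightarrow> 'a::{real_inner,complete_space} set"
  assumes closed: "\<And>n. closed (S n)" and convex: "\<And>n. convex (S n)"
    and nonempty: "\<And>n. S n \<noteq> {}" and dec: "decseq S" and bounded: "\<And>n. S n \<subseteq> cball 0 B"
  shows "(\<Inter>n. S n) \<noteq> {}"
proof -
  define m where "m n = Inf (norm ` S n)" for n
  have bdd: "bdd_below (norm ` S n)" for n by (rule bdd_belowI[of _ 0]) auto
  have m_le: "m n \<le> norm y" if "y \<in> S n" for n y
    unfolding m_def using that bdd by (intro cInf_lower) auto
  have m_nonneg: "0 \<le> m n" for n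
    unfolding m_def using nonempty[of n] by (intro cInf_greatest) auto
  have "incseq m"
    unfolding incseq_def m_def using nonempty bdd dec
    by (auto intro!: cInf_superset_mono image_mono simp: decseq_def) blast
  moreover have "bdd_above (range m)"
  proof (rule bdd_aboveI2)
    fix n
    obtain y where "y \<in> S n" using nonempty by blast
    then show "m n \<le> B" using m_le[of y n] bounded[of n] by auto
  qed
  ultimately have m_lim: "m \<longlonglongrightarrow> (SUP n. m n)" and m_le_M: "\<And>n. m n \<le> (SUP n. m n)"
    by (auto intro: LIMSEQ_incseq_SUP cSUP_upper)
  define M where "M = (SUP n. m n)"
  have "\<exists>y. y \<in> S n \<and> norm y < m n + 1 / (real n + 1)" for n
  proof -
    have "Inf (norm ` S n) < m n + 1 / (real n + 1)" unfolding m_def by simp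
    then show ?thesis using nonempty[of n] by (subst (asm) cInf_less_iff) (auto simp: bdd)
  qed
  then obtain y where y_in: "\<And>n. y n \<in> S n" and y_norm: "\<And>n. norm (y n) < m n + 1 / (real n + 1)"
    by metis
  define \<delta> where "\<delta> n = 4 * ((M + 1 / (real n + 1))^2 - (m n)^2)" for n
  have \<delta>: "(norm (y n - y k))^2 \<le> \<delta> n" if "n \<le> k" for n k
  proof -
    have yk: "y k \<in> S n" using dec that y_in[of k] by (auto simp: decseq_def)
    have "norm (y n) \<le> M + 1 / (real n + 1)"
      using y_norm[of n] m_le_M[of n] by (simp add: M_def)
    moreover have "norm (y k) \<le> M + 1 / (real n + 1)"
    proof -
      have "1 / (real k + 1) \<le> 1 / (real n + 1)" using that by (intro divide_left_mono) auto
      then show ?thesis using y_norm[of k] m_le_M[of k] by (simp add: M_def)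
    qed
    moreover have "m n \<le> norm ((1/2) *\<^sub>R (y n + y k))"
      using convexD[OF convex y_in yk, of "1/2" "1/2"] by (intro m_le) (simp add: scaleR_add_right)
    ultimately show ?thesis
      using norm_diff_sq_le_if_norm_midpoint_ge[OF m_nonneg] unfolding \<delta>_def
      by (smt (verit, best) norm_ge_zero power_mono)
  qed
  have "(\<lambda>n. 1 / (real n + 1)) \<longlonglongrightarrow> 0"
    using LIMSEQ_inverse_real_of_nat by (simp add: inverse_eq_divide add.commute)
  then have "\<delta> \<longlonglongrightarrow> 4 * ((M + 0)^2 - M^2)"
    unfolding \<delta>_def M_def by (intro tendsto_intros m_lim)
  then have "(\<lambda>n. sqrt (\<delta> n)) \<longlonglongrightarrow> 0" using tendsto_real_sqrt by fastforce
  moreover have "dist (y n) (y k) \<le> sqrt (\<delta> n)" if "n \<le> k" for n k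
    using real_le_rsqrt[OF \<delta>[OF that]] by (simp add: dist_norm)
  ultimately have "Cauchy y" by (rule Cauchy_if_dist_le)
  then obtain L where L: "y \<longlonglongrightarrow> L" by (auto simp: Cauchy_convergent_iff convergent_def)
  have "L \<in> S n" for n
  proof (rule closed_sequentially[OF closed])
    show "(\<lambda>k. y (k + n)) \<longlonglongrightarrow> L" using L by (rule LIMSEQ_ignore_initial_segment)
    show "y (k + n) \<in> S n" for k using decseqD[OF dec] y_in by (meson le_add2 subsetD)
  qed
  then show ?thesis by blast
qed

section \<open>Convex absolutely homogeneous functionals\<close>

lemma Youngs_inequality_powr:
  fixes a b p :: real
  assumes "p > 1" "a \<ge> 0" "b \<ge> 0"
  shows "a powr (p - 1) * b \<le> (p - 1) / p * a powr p + b powr p / p"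
proof -
  have q: "p / (p - 1) > 1" "1 / (p / (p - 1)) + 1 / p = 1"
    using assms(1) by (auto simp: field_simps)
  have "a powr (p - 1) * b \<le> (a powr (p - 1)) powr (p / (p - 1)) / (p / (p - 1)) + b powr p / p"
    using Youngs_inequality[OF q(1) assms(1) q(2)] assms(2,3) by simp
  also have "(a powr (p - 1)) powr (p / (p - 1)) = a powr p"
    using assms(1) by (simp add: powr_powr)
  finally show ?thesis by (simp add: field_simps)
qed

locale homogeneous_convex_functional =
  fixes J :: "'a::{real_inner,complete_space} \<Rightarrow> ereal" and p :: real
  assumes p_gt_1: "p > 1" and proper: "proper_fun J" and convex_J: "convex_fun J"
    and lsc: "lsc_fun J" and homogeneous: "abs_homogeneous p J"
begin

text \<open>\<open>real_of_ereal \<infinity> = 0\<close>, so \<open>Jr\<close> is only meaningful on the effective domain of \<open>J\<close>.\<close>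

definition Jr :: "'a \<Rightarrow> real" where "Jr x = real_of_ereal (J x)"

lemma p_pos: "p > 0"
  using p_gt_1 by simp

lemma J_not_MInfty: "J x \<noteq> -\<infinity>"
  using proper by (auto simp: proper_fun_def)

lemma J_zero [simp]: "J 0 = 0"
  using homogeneous by (simp add: abs_homogeneous_def)

lemma J_scaleR: "c \<noteq> 0 \<Longrightarrow> J (c *\<^sub>R x) = ereal (\<bar>c\<bar> powr p) * J x"
  using homogeneous by (simp add: abs_homogeneous_def)

lemma J_midpoint_le: "J ((1/2) *\<^sub>R x + (1/2) *\<^sub>R y) \<le> ereal (1/2) * J x + ereal (1/2) * J y"
  using convex_J[unfolded convex_fun_def, rule_format, of "1/2" x y] by simp

lemma J_nonneg: "J x \<ge> 0"
proof -
  note J_midpoint_le[of x "- x"]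
  moreover have "J (- x) = J x" using J_scaleR[of "-1" x] by simp
  ultimately have "0 \<le> ereal (1/2) * J x + ereal (1/2) * J x"
    by (simp add: scaleR_right_diff_distrib)
  then show ?thesis using J_not_MInfty[of x] by (cases "J x") auto
qed

lemma J_eq_Jr: "J x \<noteq> \<infinity> \<Longrightarrow> J x = ereal (Jr x)"
  using J_not_MInfty[of x] by (cases "J x") (auto simp: Jr_def)

lemma Jr_zero [simp]: "Jr 0 = 0"
  by (simp add: Jr_def)

lemma Jr_nonneg: "Jr x \<ge> 0"
  using J_nonneg[of x] by (cases "J x") (auto simp: Jr_def)

lemma Jr_scaleR: "Jr (c *\<^sub>R x) = \<bar>c\<bar> powr p * Jr x"
  using J_scaleR[of c x] J_not_MInfty[of x] by (cases "c = 0"; cases "J x") (auto simp: Jr_def)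

lemma J_scaleR_finite: "J x \<noteq> \<infinity> \<Longrightarrow> J (c *\<^sub>R x) \<noteq> \<infinity>"
  using J_scaleR[of c x] J_eq_Jr[of x] by (cases "c = 0") auto

lemma subdiff_finite:
  assumes "z \<in> subdiff J x" shows "J x \<noteq> \<infinity>"
proof
  assume "J x = \<infinity>"
  moreover obtain v where "J v \<noteq> \<infinity>" using proper by (auto simp: proper_fun_def)
  moreover have "J x + ereal (inner z (v - x)) \<le> J v" using assms by (auto simp: subdiff_def)
  ultimately show False by simp
qed

text \<open>\<open>\<epsilon>\<close>-subgradients, restricted to the effective domain so that they can be stated in real
  arithmetic.\<close>

definition eps_subdiff :: "real \<Rightarrow> 'a \<Rightarrow> 'a set" where
  "eps_subdiff \<epsilon> x = {w. \<forall>v. J v \<noteq> \<infinity> \<longrightarrow> Jr x + inner w (v - x) \<le> Jr v + \<epsilon>}"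

lemma subdiff_eq_eps_subdiff_0:
  assumes "J x \<noteq> \<infinity>" shows "subdiff J x = eps_subdiff 0 x"
proof -
  have "J x + ereal (inner w (v - x)) \<le> J v \<longleftrightarrow> (J v \<noteq> \<infinity> \<longrightarrow> Jr x + inner w (v - x) \<le> Jr v)"
    for w v
    using J_eq_Jr[OF assms] J_eq_Jr[of v] by (cases "J v = \<infinity>") auto
  then show ?thesis by (simp add: subdiff_def eps_subdiff_def)
qed

lemma subdiff_ineq: "z \<in> subdiff J x \<Longrightarrow> J v \<noteq> \<infinity> \<Longrightarrow> Jr x + inner z (v - x) \<le> Jr v"
  using subdiff_eq_eps_subdiff_0[OF subdiff_finite] by (auto simp: eps_subdiff_def)

lemma eps_subdiff_as_Inter:
  "eps_subdiff \<epsilon> x = (\<Inter>v\<in>{v. J v \<noteq> \<infinity>}. {w. inner (v - x) w \<le> Jr v + \<epsilon> - Jr x})"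
  by (auto simp: eps_subdiff_def inner_commute algebra_simps)

lemma closed_eps_subdiff: "closed (eps_subdiff \<epsilon> x)"
  unfolding eps_subdiff_as_Inter by (intro closed_INT ballI closed_halfspace_le)

lemma convex_eps_subdiff: "convex (eps_subdiff \<epsilon> x)"
  unfolding eps_subdiff_as_Inter by (intro convex_INT convex_halfspace_le)

lemma eps_subdiff_mono: "\<epsilon> \<le> \<delta> \<Longrightarrow> eps_subdiff \<epsilon> x \<subseteq> eps_subdiff \<delta> x"
  by (force simp: eps_subdiff_def)

lemma subdiff_monotone:
  assumes "z1 \<in> subdiff J x1" "z2 \<in> subdiff J x2"
  shows "inner (z1 - z2) (x1 - x2) \<ge> 0"
  using subdiff_ineq[OF assms(1) subdiff_finite[OF assms(2)]]
    subdiff_ineq[OF assms(2) subdiff_finite[OF assms(1)]]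
  by (simp add: inner_diff_left inner_diff_right)

lemma zero_in_subdiff_zero: "0 \<in> subdiff J 0"
  by (simp add: subdiff_eq_eps_subdiff_0 eps_subdiff_def Jr_nonneg)

text \<open>Euler's identity for homogeneous functions: \<open>c \<mapsto> J (c x)\<close> is minimised at \<open>c = 1\<close> by
  \<open>c \<mapsto> J x + (c - 1) \<langle>z, x\<rangle>\<close>, so their derivatives agree there.\<close>

lemma inner_subdiff_self:
  assumes z: "z \<in> subdiff J x"
  shows "inner z x = p * Jr x"
proof -
  define \<phi> where "\<phi> c = c powr p * Jr x - Jr x - (c - 1) * inner z x" for c :: real
  have "\<phi> 1 \<le> \<phi> c" if "\<bar>1 - c\<bar> < 1" for c
  proof -
    from that have "c > 0" by simp
    moreover have "Jr x + inner z (c *\<^sub>R x - x) \<le> Jr (c *\<^sub>R x)"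
      by (rule subdiff_ineq[OF z J_scaleR_finite[OF subdiff_finite[OF z]]])
    ultimately show ?thesis by (simp add: \<phi>_def Jr_scaleR inner_diff_right algebra_simps)
  qed
  moreover have "(\<phi> has_real_derivative (p * 1 powr (p - 1) * Jr x - inner z x)) (at 1)"
    unfolding \<phi>_def by (auto intro!: derivative_eq_intros)
  ultimately have "p * 1 powr (p - 1) * Jr x - inner z x = 0"
    by (intro DERIV_local_min[of \<phi> _ 1 1]) auto
  then show ?thesis by simp
qed

text \<open>Moving along the null space changes \<open>J\<close> by a bounded amount (by convexity and
  homogeneity), which a nonzero linear term \<open>s \<langle>z, n\<rangle>\<close> would violate for large \<open>s\<close>.\<close>

lemma subdiff_orthogonal_null_set:
  assumes z: "z \<in> subdiff J x" and n: "n \<in> null_set J"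
  shows "inner z n = 0"
proof (rule ccontr)
  assume ne: "inner z n \<noteq> 0"
  have fin: "J x \<noteq> \<infinity>" by (rule subdiff_finite[OF z])
  have bound: "Jr x + s * inner z n \<le> 2 powr (p - 1) * Jr x" for s
  proof -
    have "J ((2 * s) *\<^sub>R n) = 0"
      using J_scaleR[of "2 * s" n] n by (cases "s = 0") (auto simp: null_set_def)
    moreover note J_midpoint_le[of "2 *\<^sub>R x" "(2 * s) *\<^sub>R n"]
    ultimately have le: "J (x + s *\<^sub>R n) \<le> ereal (2 powr p / 2 * Jr x)"
      using J_scaleR[of 2 x] J_eq_Jr[OF fin] by simp
    then have "J (x + s *\<^sub>R n) \<noteq> \<infinity>" by auto
    from subdiff_ineq[OF z this] le J_eq_Jr[OF this]
    have "Jr x + s * inner z n \<le> 2 powr p / 2 * Jr x" by simp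
    then show ?thesis by (simp add: powr_diff)
  qed
  from bound[of "(2 powr (p - 1) * Jr x - Jr x + 1) / inner z n"] ne show False by simp
qed

text \<open>A common point of the nested closed convex sets of approximating \<open>\<epsilon>\<close>-subgradients is an exact
  subgradient, and its midpoint with \<open>z\<close> would be shorter than \<open>z\<close> unless \<open>a \<ge> \<parallel>z\<parallel>\<^sup>2\<close>.\<close>

lemma min_norm_subgrad_inner_bound:
  assumes z: "min_norm_subgrad J x z"
    and approx: "\<And>n::nat. \<exists>w\<in>eps_subdiff (1 / Suc n) x. norm w \<le> norm z \<and> inner w z \<le> a"
  shows "(norm z)^2 \<le> a"
proof -
  have z_sub: "z \<in> subdiff J x" and z_min: "\<And>\<eta>. \<eta> \<in> subdiff J x \<Longrightarrow> norm z \<le> norm \<eta>"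
    using z by (auto simp: min_norm_subgrad_def)
  have fin: "J x \<noteq> \<infinity>" by (rule subdiff_finite[OF z_sub])
  define S where "S n = eps_subdiff (1 / Suc n) x \<inter> cball 0 (norm z) \<inter> {w. inner z w \<le> a}" for n
  have "(\<Inter>n. S n) \<noteq> {}"
  proof (rule nested_closed_convex_Inter_nonempty)
    show "decseq S"
      unfolding S_def
      by (intro decseq_SucI Int_mono eps_subdiff_mono order_refl) (simp add: frac_le)
    show "closed (S n)" "convex (S n)" "S n \<subseteq> cball 0 (norm z)" for n
      unfolding S_def by (auto intro!: closed_Int convex_Int closed_eps_subdiff convex_eps_subdiff
          closed_halfspace_le convex_halfspace_le)
    show "S n \<noteq> {}" for n
      using approx[of n] by (auto simp: S_def inner_commute)
  qed
  then obtain w where w: "\<And>n. w \<in> S n" by blast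
  have "w \<in> eps_subdiff 0 x"
    unfolding eps_subdiff_def
  proof (intro CollectI allI impI)
    fix v assume "J v \<noteq> \<infinity>"
    show "Jr x + inner w (v - x) \<le> Jr v + 0"
    proof (rule field_le_epsilon)
      fix e :: real assume "e > 0"
      then obtain n where "1 / real (Suc n) < e" by (auto elim: nat_approx_posE)
      with w[of n] \<open>J v \<noteq> \<infinity>\<close> show "Jr x + inner w (v - x) \<le> Jr v + 0 + e"
        by (force simp: S_def eps_subdiff_def)
    qed
  qed
  then have "(1/2) *\<^sub>R w + (1/2) *\<^sub>R z \<in> subdiff J x"
    using z_sub convexD[OF convex_eps_subdiff, of w 0 x z "1/2" "1/2"]
    by (simp add: subdiff_eq_eps_subdiff_0[OF fin])
  then have "(norm z)^2 \<le> (norm ((1/2) *\<^sub>R w + (1/2) *\<^sub>R z))^2"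
    using z_min by (simp add: power_mono)
  also have "\<dots> = ((norm w)^2 + 2 * inner w z + (norm z)^2) / 4"
    by (simp add: power2_norm_eq_inner inner_add inner_commute field_simps)
  finally have "4 * (norm z)^2 \<le> (norm w)^2 + 2 * inner w z + (norm z)^2" by simp
  moreover have "norm w \<le> norm z" "inner w z \<le> a"
    using w[of 0] by (auto simp: S_def inner_commute)
  moreover have "(norm w)^2 \<le> (norm z)^2"
    using \<open>norm w \<le> norm z\<close> by (simp add: power_mono)
  ultimately show ?thesis by linarith
qed


definition Rq :: "'a \<Rightarrow> real" where "Rq x = p * Jr x / norm x powr p"

lemma rayleigh_eq_Rq: "J x \<noteq> \<infinity> \<Longrightarrow> x \<noteq> 0 \<Longrightarrow> rayleigh p J x = ereal (Rq x)"
  using J_eq_Jr[of x] by (simp add: rayleigh_def Rq_def)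

lemma Rq_nonneg: "Rq x \<ge> 0"
  using p_pos Jr_nonneg[of x] by (simp add: Rq_def)

lemma Rq_scaleR: "c \<noteq> 0 \<Longrightarrow> Rq (c *\<^sub>R x) = Rq x"
  by (simp add: Rq_def Jr_scaleR powr_mult)

lemma Jr_eq_Rq: "Jr x = Rq x * norm x powr p / p"
  using p_pos by (cases "x = 0") (auto simp: Rq_def)

lemma lambda1_le_Rq:
  assumes "lambda1 p J = ereal l" "x \<in> H0 J" "J x \<noteq> \<infinity>"
  shows "l \<le> Rq x"
proof -
  have "lambda1 p J \<le> rayleigh p J x"
    unfolding lambda1_def using assms(2) by (rule INF_lower)
  then show ?thesis using assms rayleigh_eq_Rq[OF assms(3)] by (simp add: H0_def)
qed

lemma lambda1_norm_powr_le_Jr: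
  assumes "lambda1 p J = ereal l" "\<forall>n\<in>null_set J. inner x n = 0" "J x \<noteq> \<infinity>"
  shows "l * norm x powr p / p \<le> Jr x"
proof (cases "x = 0")
  case False
  with assms have "l \<le> Rq x" by (intro lambda1_le_Rq) (auto simp: H0_def)
  then show ?thesis
    using p_pos by (simp add: Jr_eq_Rq[of x] divide_right_mono mult_right_mono)
qed simp

lemma ground_stateD:
  assumes "ground_state p J g" "lambda1 p J = ereal l"
  shows "g \<in> H0 J" "J g \<noteq> \<infinity>" "Jr g = l * norm g powr p / p"
proof -
  show g: "g \<in> H0 J" using assms(1) by (simp add: ground_state_def)
  then have "g \<noteq> 0" by (simp add: H0_def)
  show fin: "J g \<noteq> \<infinity>"
  proof
    assume "J g = \<infinity>"
    then have "rayleigh p J g = \<infinity>" using p_pos \<open>g \<noteq> 0\<close> by (simp add: rayleigh_def)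
    with assms show False by (simp add: ground_state_def)
  qed
  show "Jr g = l * norm g powr p / p"
    using rayleigh_eq_Rq[OF fin \<open>g \<noteq> 0\<close>] assms Jr_eq_Rq[of g] by (simp add: ground_state_def)
qed

lemma Jr_scaleR_ground_level:
  "Jr h = l * norm h powr p / p \<Longrightarrow> Jr (c *\<^sub>R h) = l * norm (c *\<^sub>R h) powr p / p"
  by (simp add: Jr_scaleR powr_mult)

lemma J_le_if_tendsto:
  assumes "x \<longlonglongrightarrow> y" "eventually (\<lambda>k. J (x k) \<le> ereal (c k)) sequentially" "c \<longlonglongrightarrow> c0"
  shows "J y \<le> ereal c0"
proof -
  have le: "J y \<le> ereal (c0 + e)" if "e > 0" for e
  proof -
    have "eventually (\<lambda>k. c k < c0 + e) sequentially"
      using assms(3) that by (intro order_tendstoD) auto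
    with assms(2) have "eventually (\<lambda>k. x k \<in> {v. J v \<le> ereal (c0 + e)}) sequentially"
      by eventually_elim (auto intro: order_trans)
    moreover have "closed {v. J v \<le> ereal (c0 + e)}" using lsc by (simp add: lsc_fun_def)
    ultimately have "y \<in> {v. J v \<le> ereal (c0 + e)}"
      by (intro Lim_in_closed_set[OF _ _ _ assms(1)]) auto
    then show ?thesis by simp
  qed
  have fin: "J y \<noteq> \<infinity>" using le[of 1] by auto
  have "Jr y \<le> c0"
    by (rule field_le_epsilon) (use le J_eq_Jr[OF fin] in auto)
  then show ?thesis using J_eq_Jr[OF fin] by simp
qed

lemma ground_state_if_Rq_tendsto:
  assumes l: "lambda1 p J = ereal l" and lim: "x \<longlonglongrightarrow> y" and y: "y \<in> H0 J"
    and fin: "eventually (\<lambda>k. J (x k) \<noteq> \<infinity>) sequentially"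
    and R: "(\<lambda>k. Rq (x k)) \<longlonglongrightarrow> l"
  shows "ground_state p J y"
proof -
  have "y \<noteq> 0" using y by (simp add: H0_def)
  have "J (x k) \<le> ereal (Rq (x k) * norm (x k) powr p / p)" if "J (x k) \<noteq> \<infinity>" for k
    using J_eq_Jr[OF that] Jr_eq_Rq[of "x k"] by simp
  then have "eventually (\<lambda>k. J (x k) \<le> ereal (Rq (x k) * norm (x k) powr p / p)) sequentially"
    using fin by (auto elim: eventually_mono)
  moreover have "(\<lambda>k. Rq (x k) * norm (x k) powr p / p) \<longlonglongrightarrow> l * norm y powr p / p"
    using \<open>y \<noteq> 0\<close> p_pos by (intro tendsto_intros R lim) auto
  ultimately have le: "J y \<le> ereal (l * norm y powr p / p)" by (rule J_le_if_tendsto[OF lim])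
  then have finy: "J y \<noteq> \<infinity>" by auto
  have "Jr y * p \<le> l * norm y powr p"
    using le J_eq_Jr[OF finy] p_pos by (simp add: pos_le_divide_eq)
  then have "Rq y \<le> l"
    using p_pos \<open>y \<noteq> 0\<close> by (simp add: Rq_def pos_divide_le_eq mult.commute)
  moreover have "l \<le> Rq y" by (rule lambda1_le_Rq[OF l y finy])
  ultimately show ?thesis
    using rayleigh_eq_Rq[OF finy \<open>y \<noteq> 0\<close>] l y by (simp add: ground_state_def)
qed

text \<open>At a point \<open>v\<close> of minimal Rayleigh quotient, \<open>\<lambda>\<^sub>1 \<parallel>v\<parallel>\<^bsup>p-2\<^esup> v\<close> acts as a subgradient towards every
  \<open>x \<perp> N(J)\<close>: combine \<open>\<lambda>\<^sub>1 \<parallel>x\<parallel>\<^sup>p / p \<le> J x\<close> with Young's inequality.\<close>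

lemma ground_level_subgradient_ineq:
  assumes l: "lambda1 p J = ereal l" "l \<ge> 0" and perp: "\<forall>n\<in>null_set J. inner x n = 0"
    and fin: "J x \<noteq> \<infinity>" and v: "Jr v = l * norm v powr p / p"
  shows "Jr v + inner ((l * norm v powr (p - 2)) *\<^sub>R v) (x - v) \<le> Jr x"
proof -
  have cs: "norm v powr (p - 2) * inner v x \<le> norm v powr (p - 1) * norm x"
  proof (cases "v = 0")
    case False
    have "norm v powr (p - 2) * inner v x \<le> norm v powr (p - 2) * (norm v * norm x)"
      by (intro mult_left_mono norm_cauchy_schwarz) auto
    also have "\<dots> = (norm v powr (p - 2) * norm v powr 1) * norm x" using False by simp
    also have "norm v powr (p - 2) * norm v powr 1 = norm v powr (p - 2 + 1)"
      by (rule powr_add[symmetric])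
    also have "p - 2 + 1 = p - 1" by simp
    finally show ?thesis .
  qed simp
  have sq: "norm v powr (p - 2) * inner v v = norm v powr p"
  proof (cases "v = 0")
    case False
    have "norm v powr (p - 2) * inner v v = norm v powr (p - 2) * norm v powr 2"
      using False by (simp add: power2_norm_eq_inner[symmetric])
    also have "\<dots> = norm v powr (p - 2 + 2)" by (rule powr_add[symmetric])
    finally show ?thesis by simp
  qed (use p_pos in simp)
  have "Jr v + inner ((l * norm v powr (p - 2)) *\<^sub>R v) (x - v) =
        l * norm v powr p / p + l * (norm v powr (p - 2) * inner v x) - l * norm v powr p"
    using v sq by (simp add: inner_diff_right algebra_simps)
  also have "\<dots> \<le> l * norm v powr p / p + l * ((p - 1) / p * norm v powr p + norm x powr p / p)
      - l * norm v powr p"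
    using cs Youngs_inequality_powr[OF p_gt_1, of "norm v" "norm x"] l(2)
    by (auto intro!: mult_left_mono)
  also have "\<dots> = l * norm x powr p / p" using p_pos by (simp add: field_simps)
  also have "\<dots> \<le> Jr x" by (rule lambda1_norm_powr_le_Jr[OF l(1) perp fin])
  finally show ?thesis .
qed

end

section \<open>The gradient flow\<close>

locale gradient_flow_trajectory = homogeneous_convex_functional J p
  for J :: "'a::{real_inner,complete_space} \<Rightarrow> ereal" and p :: real +
  fixes u \<zeta> :: "real \<Rightarrow> 'a"
  assumes u_cont: "continuous_on {0..} u"
    and \<zeta>_min_norm_subgrad: "\<And>t. t > 0 \<Longrightarrow> min_norm_subgrad J (u t) (\<zeta> t)"
    and u_deriv: "\<And>t. t > 0 \<Longrightarrow> (u has_vector_derivative - \<zeta> t) (at_right t)"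
begin

lemma \<zeta>_subdiff: "t > 0 \<Longrightarrow> \<zeta> t \<in> subdiff J (u t)"
  using \<zeta>_min_norm_subgrad by (auto simp: min_norm_subgrad_def)

lemma J_u_finite: "t > 0 \<Longrightarrow> J (u t) \<noteq> \<infinity>"
  using subdiff_finite[OF \<zeta>_subdiff] .

lemma continuous_on_u: "0 \<le> a \<Longrightarrow> continuous_on {a..b} u"
  by (rule continuous_on_subset[OF u_cont]) auto

lemma inner_u_null_set:
  assumes "0 \<le> t" "n \<in> null_set J"
  shows "inner (u t) n = inner (u 0) n"
proof -
  define g where "g s = inner (u s) n" for s
  have deriv: "(g has_real_derivative 0) (at_right s)" if "s > 0" for s
    using has_vector_derivative_inner[OF u_deriv[OF that], of "\<lambda>_. n" 0]
      subdiff_orthogonal_null_set[OF \<zeta>_subdiff[OF that] assms(2)]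
    unfolding g_def by simp
  have cont: "continuous_on {0..t} g"
    unfolding g_def by (intro continuous_intros continuous_on_u) auto
  have "g t - g 0 \<le> 0 * (t - 0)"
    by (rule right_deriv_upper_bound[OF assms(1) cont, of "\<lambda>_. 0"]) (use deriv in auto)
  moreover have "0 * (t - 0) \<le> g t - g 0"
    by (rule right_deriv_lower_bound[OF assms(1) cont, of "\<lambda>_. 0"]) (use deriv in auto)
  ultimately show ?thesis by (simp add: g_def)
qed

lemma u_tendsto_at_right: "0 \<le> t \<Longrightarrow> (u \<longlongrightarrow> u t) (at_right t)"
  using u_cont by (auto simp: continuous_on_def intro: tendsto_within_subset)

lemma norm_u_antimono:
  assumes "0 \<le> s" "s \<le> t"
  shows "norm (u t) \<le> norm (u s)"
proof -
  have "norm (u t - 0) \<le> norm (u s - 0)"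
  proof (rule norm_diff_le_if_monotone_velocities[where \<xi> = \<zeta> and \<eta> = "\<lambda>_. 0"])
    fix r assume r: "s < r" "r < t"
    show "(u has_vector_derivative - \<zeta> r) (at_right r)" using r assms by (intro u_deriv) auto
    show "((\<lambda>_. 0) has_vector_derivative - 0) (at_right r)" by (auto intro: derivative_eq_intros)
    show "0 \<le> inner (\<zeta> r - 0) (u r - 0)"
      using subdiff_monotone[OF \<zeta>_subdiff zero_in_subdiff_zero, of r] r assms by auto
  qed (use assms continuous_on_u in auto)
  then show ?thesis by simp
qed

lemma tendsto_0_if_extinct:
  assumes "0 \<le> T" "u T = 0" "filterlim tk at_top sequentially" "(\<lambda>k. c k *\<^sub>R u (tk k)) \<longlonglongrightarrow> y"
  shows "y = 0"
proof -
  have "eventually (\<lambda>k. T \<le> tk k) sequentially" using assms(3) by (simp add: filterlim_at_top)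
  then have "eventually (\<lambda>k. c k *\<^sub>R u (tk k) = 0) sequentially"
    by eventually_elim (use norm_u_antimono assms(1,2) in fastforce)
  then have "(\<lambda>k. c k *\<^sub>R u (tk k)) \<longlonglongrightarrow> 0" by (rule tendsto_eventually)
  with assms(4) show ?thesis by (rule LIMSEQ_unique)
qed

text \<open>The flow started at \<open>u h\<close> is \<open>u (\<cdot> + h)\<close>; comparing the two gives that \<open>\<parallel>u (t + h) - u t\<parallel>\<close>
  decreases in \<open>t\<close>, and dividing by \<open>h\<close> gives the same for the speed \<open>\<parallel>\<zeta> t\<parallel>\<close>.\<close>

lemma norm_\<zeta>_antimono:
  assumes "0 < s" "s \<le> t"
  shows "norm (\<zeta> t) \<le> norm (\<zeta> s)"
proof -
  have "norm (u (t + h) - u t) \<le> norm (u (s + h) - u s)" if h: "h > 0" for h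
  proof (rule norm_diff_le_if_monotone_velocities[where \<xi> = "\<lambda>r. \<zeta> (r + h)" and \<eta> = \<zeta>])
    show "continuous_on {s..t} (\<lambda>r. u (r + h))"
      using assms h by (intro continuous_on_compose2[OF u_cont]) (auto intro!: continuous_intros)
    fix r assume r: "s < r" "r < t"
    show "((\<lambda>r. u (r + h)) has_vector_derivative - \<zeta> (r + h)) (at_right r)"
      using r assms h by (intro has_vector_derivative_at_right_shift u_deriv) auto
    show "(u has_vector_derivative - \<zeta> r) (at_right r)" using r assms by (intro u_deriv) auto
    show "0 \<le> inner (\<zeta> (r + h) - \<zeta> r) (u (r + h) - u r)"
      using subdiff_monotone[OF \<zeta>_subdiff \<zeta>_subdiff, of "r + h" r] r assms h by auto
  qed (use assms continuous_on_u in auto)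
  then have "eventually (\<lambda>h. norm ((1 / h) *\<^sub>R (u (t + h) - u t)) \<le>
      norm ((1 / h) *\<^sub>R (u (s + h) - u s))) (at_right 0)"
    by (auto simp: eventually_at_right_field intro!: exI[of _ 1] divide_right_mono)
  moreover have "((\<lambda>h. norm ((1 / h) *\<^sub>R (u (r + h) - u r))) \<longlongrightarrow> norm (- \<zeta> r)) (at_right 0)"
    if "r > 0" for r
    using that by (intro tendsto_norm has_vector_derivative_imp_tendsto_increment_quotient u_deriv)
  ultimately have "norm (- \<zeta> t) \<le> norm (- \<zeta> s)"
    using assms by (intro tendsto_le[of "at_right 0"]) auto
  then show ?thesis by simp
qed

lemma \<zeta>_eps_subdiff:
  assumes "0 < t" "t < y"
  shows "\<zeta> y \<in> eps_subdiff (2 * norm (\<zeta> t) * norm (u y - u t)) (u t)"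
  unfolding eps_subdiff_def
proof (intro CollectI allI impI)
  fix v assume v: "J v \<noteq> \<infinity>"
  have "Jr (u y) + inner (\<zeta> y) (v - u y) \<le> Jr v"
    using assms by (intro subdiff_ineq[OF \<zeta>_subdiff v]) auto
  moreover have "Jr (u t) + inner (\<zeta> t) (u y - u t) \<le> Jr (u y)"
    using assms by (intro subdiff_ineq[OF \<zeta>_subdiff J_u_finite]) auto
  moreover have "inner (\<zeta> y - \<zeta> t) (u y - u t) \<le> 2 * norm (\<zeta> t) * norm (u y - u t)"
  proof -
    have "inner (\<zeta> y - \<zeta> t) (u y - u t) \<le> (norm (\<zeta> y) + norm (\<zeta> t)) * norm (u y - u t)"
      by (metis norm_cauchy_schwarz norm_triangle_ineq4 mult_right_mono norm_ge_zero order_trans)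
    also have "\<dots> \<le> 2 * norm (\<zeta> t) * norm (u y - u t)"
      using norm_\<zeta>_antimono[of t y] assms by (intro mult_right_mono) auto
    finally show ?thesis .
  qed
  ultimately show "Jr (u t) + inner (\<zeta> y) (v - u t) \<le> Jr v + 2 * norm (\<zeta> t) * norm (u y - u t)"
    by (simp add: inner_diff_left inner_diff_right)
qed

lemma inner_\<zeta>_tendsto:
  assumes t: "0 < t"
  shows "((\<lambda>y. inner (\<zeta> y) (\<zeta> t)) \<longlongrightarrow> (norm (\<zeta> t))^2) (at_right t)"
proof (rule order_tendstoI)
  fix a assume a: "(norm (\<zeta> t))^2 < a"
  have "inner (\<zeta> y) (\<zeta> t) < a" if "t < y" for y
  proof -
    have "inner (\<zeta> y) (\<zeta> t) \<le> norm (\<zeta> y) * norm (\<zeta> t)" by (rule norm_cauchy_schwarz)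
    also have "\<dots> \<le> norm (\<zeta> t) * norm (\<zeta> t)"
      using t that by (intro mult_right_mono norm_\<zeta>_antimono) auto
    finally show ?thesis using a by (simp add: power2_eq_square)
  qed
  then show "eventually (\<lambda>y. inner (\<zeta> y) (\<zeta> t) < a) (at_right t)"
    by (auto simp: eventually_at_right_field intro!: exI[of _ "t + 1"])
next
  fix a assume a: "a < (norm (\<zeta> t))^2"
  show "eventually (\<lambda>y. a < inner (\<zeta> y) (\<zeta> t)) (at_right t)"
  proof (rule ccontr)
    assume "\<not> ?thesis"
    then have freq: "frequently (\<lambda>y. inner (\<zeta> y) (\<zeta> t) \<le> a) (at_right t)"
      by (simp add: not_eventually not_less)
    have "\<exists>w\<in>eps_subdiff (1 / Suc n) (u t). norm w \<le> norm (\<zeta> t) \<and> inner w (\<zeta> t) \<le> a" for n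
    proof -
      have "((\<lambda>y. 2 * norm (\<zeta> t) * norm (u y - u t)) \<longlongrightarrow> 2 * norm (\<zeta> t) * norm (u t - u t))
          (at_right t)"
        using t by (intro tendsto_intros u_tendsto_at_right) auto
      then have "eventually (\<lambda>y. 2 * norm (\<zeta> t) * norm (u y - u t) < 1 / Suc n) (at_right t)"
        by (intro order_tendstoD) auto
      then have "eventually (\<lambda>y. 2 * norm (\<zeta> t) * norm (u y - u t) < 1 / Suc n \<and> t < y)
          (at_right t)"
        using eventually_at_right_less by (rule eventually_conj)
      then have "\<exists>y. inner (\<zeta> y) (\<zeta> t) \<le> a \<and> 2 * norm (\<zeta> t) * norm (u y - u t) < 1 / Suc n \<and> t < y"
        by (rule frequently_ex[OF frequently_eventually_frequently[OF freq]])
      then obtain y where y: "inner (\<zeta> y) (\<zeta> t) \<le> a" "t < y"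
        "2 * norm (\<zeta> t) * norm (u y - u t) < 1 / Suc n"
        by blast
      have "\<zeta> y \<in> eps_subdiff (1 / Suc n) (u t)"
        using \<zeta>_eps_subdiff[OF t y(2)] eps_subdiff_mono[OF less_imp_le[OF y(3)]] by blast
      moreover have "norm (\<zeta> y) \<le> norm (\<zeta> t)" using norm_\<zeta>_antimono[of t y] t y by simp
      ultimately show ?thesis using y(1) by blast
    qed
    then have "(norm (\<zeta> t))^2 \<le> a"
      by (rule min_norm_subgrad_inner_bound[OF \<zeta>_min_norm_subgrad[OF t]])
    with a show False by simp
  qed
qed


lemma Jr_u_diff_le:
  assumes "0 < a" "a \<le> s" "a \<le> r"
  shows "\<bar>Jr (u s) - Jr (u r)\<bar> \<le> norm (\<zeta> a) * norm (u s - u r)"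
proof -
  have "Jr (u r) + inner (\<zeta> r) (u s - u r) \<le> Jr (u s)"
    and "Jr (u s) + inner (\<zeta> s) (u r - u s) \<le> Jr (u r)"
    using assms by (auto intro!: subdiff_ineq[OF \<zeta>_subdiff J_u_finite])
  moreover have "inner (\<zeta> s) (u r - u s) = - inner (\<zeta> s) (u s - u r)"
    by (simp add: inner_diff_right)
  moreover have "\<bar>inner (\<zeta> x) (u s - u r)\<bar> \<le> norm (\<zeta> a) * norm (u s - u r)" if "a \<le> x" for x
  proof -
    have "\<bar>inner (\<zeta> x) (u s - u r)\<bar> \<le> norm (\<zeta> x) * norm (u s - u r)"
      by (rule Cauchy_Schwarz_ineq2)
    also have "\<dots> \<le> norm (\<zeta> a) * norm (u s - u r)"
      using assms(1) that by (intro mult_right_mono norm_\<zeta>_antimono) auto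
    finally show ?thesis .
  qed
  ultimately show ?thesis
    using assms(2,3) unfolding abs_le_iff by (smt (verit))
qed

lemma continuous_on_Jr_u:
  assumes "0 < a" shows "continuous_on {a..b} (\<lambda>s. Jr (u s))"
  unfolding continuous_on_def
proof
  fix r assume r: "r \<in> {a..b}"
  have "((\<lambda>s. Jr (u s) - Jr (u r)) \<longlongrightarrow> 0) (at r within {a..b})"
  proof (rule Lim_null_comparison)
    show "eventually (\<lambda>s. norm (Jr (u s) - Jr (u r)) \<le> norm (\<zeta> a) * norm (u s - u r))
        (at r within {a..b})"
      using r Jr_u_diff_le[OF assms] by (auto simp: eventually_at_filter)
    have "(u \<longlongrightarrow> u r) (at r within {a..b})"
      using continuous_on_u[of a b] assms r by (auto simp: continuous_on_def)
    then have "((\<lambda>s. norm (\<zeta> a) * norm (u s - u r)) \<longlongrightarrow> norm (\<zeta> a) * norm (u r - u r))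
        (at r within {a..b})"
      by (intro tendsto_intros)
    then show "((\<lambda>s. norm (\<zeta> a) * norm (u s - u r)) \<longlongrightarrow> 0) (at r within {a..b})" by simp
  qed
  then show "((\<lambda>s. Jr (u s)) \<longlongrightarrow> Jr (u r)) (at r within {a..b})" by (simp add: LIM_zero_iff)
qed

lemma inner_\<zeta>_quotient_tendsto:
  assumes t: "0 < t"
  shows "((\<lambda>y. inner (\<zeta> y) ((1 / (y - t)) *\<^sub>R (u y - u t))) \<longlongrightarrow> - ((norm (\<zeta> t))^2))
    (at_right t)"
proof -
  define D where "D y = (1 / (y - t)) *\<^sub>R (u y - u t)" for y
  have D: "(D \<longlongrightarrow> - \<zeta> t) (at_right t)"
    unfolding D_def by (rule has_vector_derivative_imp_tendsto_quotient[OF u_deriv[OF t]])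
  have "((\<lambda>y. inner (\<zeta> y) (D y + \<zeta> t)) \<longlongrightarrow> 0) (at_right t)"
  proof (rule Lim_null_comparison)
    show "eventually (\<lambda>y. norm (inner (\<zeta> y) (D y + \<zeta> t)) \<le> norm (\<zeta> t) * norm (D y + \<zeta> t))
        (at_right t)"
    proof (rule eventually_at_right_less[THEN eventually_mono])
      fix y assume "t < y"
      have "norm (inner (\<zeta> y) (D y + \<zeta> t)) \<le> norm (\<zeta> y) * norm (D y + \<zeta> t)"
        using Cauchy_Schwarz_ineq2[of "\<zeta> y" "D y + \<zeta> t"] by simp
      also have "\<dots> \<le> norm (\<zeta> t) * norm (D y + \<zeta> t)"
        using norm_\<zeta>_antimono[of t y] t \<open>t < y\<close> by (intro mult_right_mono) auto
      finally show "norm (inner (\<zeta> y) (D y + \<zeta> t)) \<le> norm (\<zeta> t) * norm (D y + \<zeta> t)" .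
    qed
    have "((\<lambda>y. norm (\<zeta> t) * norm (D y + \<zeta> t)) \<longlongrightarrow> norm (\<zeta> t) * norm (- \<zeta> t + \<zeta> t))
        (at_right t)"
      by (intro tendsto_intros D)
    then show "((\<lambda>y. norm (\<zeta> t) * norm (D y + \<zeta> t)) \<longlongrightarrow> 0) (at_right t)" by simp
  qed
  from tendsto_add[OF tendsto_minus[OF inner_\<zeta>_tendsto[OF t]] this]
  show ?thesis by (simp add: inner_add_right D_def)
qed

text \<open>The difference quotients of \<open>J \<circ> u\<close> are squeezed between \<open>\<langle>\<zeta> t, D y\<rangle>\<close> and \<open>\<langle>\<zeta> y, D y\<rangle>\<close>,
  \<open>D y\<close> the difference quotient of \<open>u\<close>; the weak right continuity of \<open>\<zeta>\<close> makes both tend to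
  \<open>-\<parallel>\<zeta> t\<parallel>\<^sup>2\<close>.\<close>

lemma Jr_u_right_deriv:
  assumes t: "0 < t"
  shows "((\<lambda>s. Jr (u s)) has_real_derivative - ((norm (\<zeta> t))^2)) (at_right t)"
proof -
  define D where "D y = (1 / (y - t)) *\<^sub>R (u y - u t)" for y
  have D: "(D \<longlongrightarrow> - \<zeta> t) (at_right t)"
    unfolding D_def by (rule has_vector_derivative_imp_tendsto_quotient[OF u_deriv[OF t]])
  have "((\<lambda>y. inner (\<zeta> t) (D y)) \<longlongrightarrow> inner (\<zeta> t) (- \<zeta> t)) (at_right t)"
    by (intro tendsto_intros D)
  then have lower: "((\<lambda>y. inner (\<zeta> t) (D y)) \<longlongrightarrow> - ((norm (\<zeta> t))^2)) (at_right t)"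
    by (simp add: power2_norm_eq_inner)
  have upper: "((\<lambda>y. inner (\<zeta> y) (D y)) \<longlongrightarrow> - ((norm (\<zeta> t))^2)) (at_right t)"
    unfolding D_def by (rule inner_\<zeta>_quotient_tendsto[OF t])
  have "eventually (\<lambda>y. inner (\<zeta> t) (D y) \<le> (Jr (u y) - Jr (u t)) / (y - t)) (at_right t)"
  proof (rule eventually_at_right_less[THEN eventually_mono])
    fix y assume y: "t < y"
    have "Jr (u t) + inner (\<zeta> t) (u y - u t) \<le> Jr (u y)"
      using y t by (intro subdiff_ineq[OF \<zeta>_subdiff[OF t] J_u_finite]) auto
    then have "inner (\<zeta> t) (u y - u t) / (y - t) \<le> (Jr (u y) - Jr (u t)) / (y - t)"
      using y by (intro divide_right_mono) auto
    then show "inner (\<zeta> t) (D y) \<le> (Jr (u y) - Jr (u t)) / (y - t)" by (simp add: D_def)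
  qed
  moreover have "eventually (\<lambda>y. (Jr (u y) - Jr (u t)) / (y - t) \<le> inner (\<zeta> y) (D y)) (at_right t)"
  proof (rule eventually_at_right_less[THEN eventually_mono])
    fix y assume y: "t < y"
    have "Jr (u y) + inner (\<zeta> y) (u t - u y) \<le> Jr (u t)"
      using y t by (intro subdiff_ineq[OF \<zeta>_subdiff J_u_finite]) auto
    then have "(Jr (u y) - Jr (u t)) / (y - t) \<le> inner (\<zeta> y) (u y - u t) / (y - t)"
      using y by (intro divide_right_mono) (auto simp: inner_diff_right)
    then show "(Jr (u y) - Jr (u t)) / (y - t) \<le> inner (\<zeta> y) (D y)" by (simp add: D_def)
  qed
  ultimately have "((\<lambda>y. (Jr (u y) - Jr (u t)) / (y - t)) \<longlongrightarrow> - ((norm (\<zeta> t))^2)) (at_right t)"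
    by (rule tendsto_sandwich[OF _ _ lower upper])
  then show ?thesis by (simp add: has_field_derivative_iff)
qed

end

lemma norm_powr_eq_inner_powr: "norm x powr p = inner x x powr (p / 2)"
  by (simp add: norm_eq_sqrt_inner powr_half_sqrt[symmetric] powr_powr)

locale nonvanishing_gradient_flow = gradient_flow_trajectory +
  assumes u_nonzero: "\<And>t. 0 \<le> t \<Longrightarrow> u t \<noteq> 0"
begin

definition R :: "real \<Rightarrow> real" where "R t = Rq (u t)"

text \<open>\<open>\<Phi>\<close> is a primitive of \<open>R\<close> along the flow, because \<open>\<parallel>u\<parallel>\<^sup>2\<close> has right derivative
  \<open>-2 \<langle>\<zeta>, u\<rangle> = -2 p J u\<close>.\<close>

definition \<Phi> :: "real \<Rightarrow> real" where
  "\<Phi> t = (if p = 2 then - ln (norm (u t)) else norm (u t) powr (2 - p) / (p - 2))"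

lemma inner_u_u_pos: "0 \<le> t \<Longrightarrow> inner (u t) (u t) > 0"
  using u_nonzero by simp

lemma inner_u_u_right_deriv:
  assumes "t > 0"
  shows "((\<lambda>s. inner (u s) (u s)) has_real_derivative - 2 * p * Jr (u t)) (at_right t)"
proof -
  have "inner (u t) (- \<zeta> t) + inner (- \<zeta> t) (u t) = - 2 * p * Jr (u t)"
    using inner_subdiff_self[OF \<zeta>_subdiff[OF assms]] by (simp add: inner_commute)
  then show ?thesis
    using has_vector_derivative_inner[OF u_deriv[OF assms] u_deriv[OF assms]] by simp
qed

lemma continuous_on_inner_u_u: "0 \<le> a \<Longrightarrow> continuous_on {a..b} (\<lambda>s. inner (u s) (u s))"
  by (intro continuous_intros continuous_on_u)

lemma R_eq: "R = (\<lambda>s. p * (Jr (u s) / inner (u s) (u s) powr (p / 2)))"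
  by (simp add: fun_eq_iff R_def Rq_def norm_powr_eq_inner_powr)

lemma \<Phi>_eq:
  assumes "0 \<le> t"
  shows "\<Phi> t = (if p = 2 then - ln (inner (u t) (u t)) / 2
                else inner (u t) (u t) powr ((2 - p) / 2) / (p - 2))"
proof -
  have "ln (norm (u t)) = ln (inner (u t) (u t)) / 2"
    using inner_u_u_pos[OF assms] by (simp add: norm_eq_sqrt_inner ln_sqrt)
  then show ?thesis by (simp add: \<Phi>_def norm_powr_eq_inner_powr)
qed

lemma continuous_on_R: "0 < a \<Longrightarrow> continuous_on {a..b} R"
  unfolding R_eq using inner_u_u_pos
  by (intro continuous_intros continuous_on_Jr_u continuous_on_inner_u_u) auto

text \<open>By Cauchy-Schwarz, \<open>(p J u)\<^sup>2 = \<langle>\<zeta>, u\<rangle>\<^sup>2 \<le> \<parallel>\<zeta>\<parallel>\<^sup>2 \<parallel>u\<parallel>\<^sup>2\<close>, which is exactly the sign of the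
  numerator of the derivative of the quotient \<open>R\<close>.\<close>

lemma R_right_deriv_nonpos:
  assumes t: "t > 0"
  shows "\<exists>D\<le>0. (R has_real_derivative D) (at_right t)"
proof -
  define N where "N = inner (u t) (u t)"
  define E where "E = Jr (u t)"
  define Q where "Q = N powr (p / 2 - 1)"
  have N: "N > 0" using inner_u_u_pos t by (simp add: N_def)
  have "((\<lambda>s. inner (u s) (u s) powr (p / 2)) has_real_derivative (p / 2) * Q * (- 2 * p * E))
      (at_right t)"
    unfolding Q_def N_def E_def
    by (rule DERIV_chain2[OF has_real_derivative_powr inner_u_u_right_deriv[OF t]])
      (use N in \<open>simp add: N_def\<close>)
  then have "(R has_real_derivative
      p * (((- ((norm (\<zeta> t))^2)) * N powr (p / 2) - E * ((p / 2) * Q * (- 2 * p * E)))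
        / (N powr (p / 2) * N powr (p / 2)))) (at_right t)"
    unfolding R_eq N_def E_def
    by (rule DERIV_cmult[OF DERIV_divide[OF Jr_u_right_deriv[OF t]]]) (use N in \<open>simp add: N_def\<close>)
  moreover have "(- ((norm (\<zeta> t))^2)) * N powr (p / 2) - E * ((p / 2) * Q * (- 2 * p * E)) \<le> 0"
  proof -
    have "(p * E)^2 \<le> (norm (\<zeta> t))^2 * N"
      using Cauchy_Schwarz_ineq[of "\<zeta> t" "u t"] inner_subdiff_self[OF \<zeta>_subdiff[OF t]]
      by (simp add: N_def E_def power2_norm_eq_inner)
    moreover have "N powr (p / 2) = Q * N"
      using N by (simp add: Q_def powr_diff)
    then have "(- ((norm (\<zeta> t))^2)) * N powr (p / 2) - E * ((p / 2) * Q * (- 2 * p * E)) =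
        Q * ((p * E)^2 - (norm (\<zeta> t))^2 * N)"
      by (simp add: algebra_simps power2_eq_square)
    moreover have "Q \<ge> 0" by (simp add: Q_def)
    ultimately show ?thesis by (simp add: mult_nonneg_nonpos)
  qed
  then have "p * (((- ((norm (\<zeta> t))^2)) * N powr (p / 2) - E * ((p / 2) * Q * (- 2 * p * E)))
      / (N powr (p / 2) * N powr (p / 2))) \<le> 0"
    using p_pos N by (intro mult_nonneg_nonpos divide_nonpos_pos) auto
  ultimately show ?thesis by blast
qed

lemma R_antimono:
  assumes "0 < s" "s \<le> t"
  shows "R t \<le> R s"
proof -
  obtain D where D: "\<And>r. r > 0 \<Longrightarrow> D r \<le> 0 \<and> (R has_real_derivative D r) (at_right r)"
    using R_right_deriv_nonpos by metis
  have "R t - R s \<le> 0 * (t - s)"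
    using assms D by (intro right_deriv_upper_bound[of s t R D 0] continuous_on_R) auto
  then show ?thesis by simp
qed

lemma \<Phi>_right_deriv:
  assumes t: "t > 0"
  shows "(\<Phi> has_real_derivative R t) (at_right t)"
proof -
  define N where "N = inner (u t) (u t)"
  define E where "E = Jr (u t)"
  have N: "N > 0" using inner_u_u_pos t by (simp add: N_def)
  have R_t: "R t = p * E / N powr (p / 2)" by (simp add: R_eq N_def E_def)
  have "((\<lambda>s. if p = 2 then - ln (inner (u s) (u s)) / 2
      else inner (u s) (u s) powr ((2 - p) / 2) / (p - 2)) has_real_derivative R t) (at_right t)"
  proof (cases "p = 2")
    case True
    have "((\<lambda>s. - ln (inner (u s) (u s)) / 2) has_real_derivative
        - (inverse N * (- 2 * p * E)) / 2) (at_right t)"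
      unfolding N_def E_def
      by (intro DERIV_cdivide DERIV_minus DERIV_chain2[OF DERIV_ln inner_u_u_right_deriv[OF t]])
        (use N in \<open>simp add: N_def\<close>)
    moreover have "- (inverse N * (- 2 * p * E)) / 2 = R t"
      unfolding R_t using True N by (simp add: field_simps)
    ultimately show ?thesis using True by simp
  next
    case False
    have "((\<lambda>s. inner (u s) (u s) powr ((2 - p) / 2) / (p - 2)) has_real_derivative
        (2 - p) / 2 * N powr ((2 - p) / 2 - 1) * (- 2 * p * E) / (p - 2)) (at_right t)"
      unfolding N_def E_def
      by (intro DERIV_cdivide DERIV_chain2[OF has_real_derivative_powr inner_u_u_right_deriv[OF t]])
        (use N in \<open>simp add: N_def\<close>)
    moreover have "(2 - p) / 2 - 1 = - (p / 2)" by (simp add: field_simps)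
    then have "(2 - p) / 2 * N powr ((2 - p) / 2 - 1) * (- 2 * p * E) / (p - 2) = R t"
      unfolding R_t using False N by (simp add: powr_minus_divide field_simps)
    ultimately show ?thesis using False by simp
  qed
  moreover have "eventually (\<lambda>s. \<Phi> s = (if p = 2 then - ln (inner (u s) (u s)) / 2
      else inner (u s) (u s) powr ((2 - p) / 2) / (p - 2))) (at_right t)"
    using t by (auto simp: eventually_at_right_field \<Phi>_eq intro!: exI[of _ "t + 1"])
  ultimately show ?thesis
    using \<Phi>_eq[of t] t by (subst has_field_derivative_cong_eventually) auto
qed

lemma continuous_on_\<Phi>:
  assumes "0 \<le> a" shows "continuous_on {a..b} \<Phi>"
proof -
  have "continuous_on {a..b} (\<lambda>t. norm (u t))"
    using assms by (intro continuous_intros continuous_on_u)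
  moreover have "\<forall>t\<in>{a..b}. norm (u t) > 0" using assms u_nonzero by auto
  ultimately show ?thesis
    unfolding \<Phi>_def by (cases "p = 2") (auto intro!: continuous_intros)
qed

lemma \<Phi>_increment_bounds:
  assumes "0 < s" "s \<le> t"
  shows "R t * (t - s) \<le> \<Phi> t - \<Phi> s" "\<Phi> t - \<Phi> s \<le> R s * (t - s)"
  using assms R_antimono \<Phi>_right_deriv continuous_on_\<Phi>[of s t]
  by (auto intro!: right_deriv_lower_bound[of s t \<Phi> R] right_deriv_upper_bound[of s t \<Phi> R])


lemma lambda1_less_infinity:
  assumes "\<forall>n\<in>null_set J. inner (u 0) n = 0"
  shows "lambda1 p J < \<infinity>"
proof -
  have "u 1 \<in> H0 J"
    using inner_u_null_set[of 1] assms u_nonzero[of 1] by (simp add: H0_def)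
  then have "lambda1 p J \<le> rayleigh p J (u 1)" unfolding lambda1_def by (rule INF_lower)
  also have "\<dots> = ereal (Rq (u 1))" using J_u_finite u_nonzero by (intro rayleigh_eq_Rq) auto
  finally show ?thesis by (rule le_less_trans) simp
qed

definition R_inf :: real where "R_inf = Inf (R ` {0<..})"

lemma bdd_below_R: "bdd_below (R ` A)"
  by (rule bdd_belowI2[of _ 0]) (simp add: R_def Rq_nonneg)

lemma R_inf_le_R: "t > 0 \<Longrightarrow> R_inf \<le> R t"
  unfolding R_inf_def by (rule cInf_lower) (auto intro: bdd_below_R)

lemma R_less_if_R_inf_less:
  assumes "R_inf < a"
  obtains t where "t > 0" "R t < a"
  using assms unfolding R_inf_def
  by (subst (asm) cInf_less_iff) (auto intro: bdd_below_R simp: gt_ex)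

lemma R_tendsto_R_inf: "(R \<longlongrightarrow> R_inf) at_top"
proof (rule order_tendstoI)
  fix a assume "a < R_inf"
  then show "eventually (\<lambda>t. a < R t) at_top"
    using R_inf_le_R by (intro eventually_at_top_linorderI[of 1]) (auto intro: less_le_trans)
next
  fix a assume "R_inf < a"
  then obtain T where "T > 0" "R T < a" by (rule R_less_if_R_inf_less)
  then show "eventually (\<lambda>t. R t < a) at_top"
    using R_antimono by (intro eventually_at_top_linorderI[of T]) (auto intro: le_less_trans)
qed

lemma \<Phi>_over_t_tendsto: "((\<lambda>t. \<Phi> t / t) \<longlongrightarrow> R_inf) at_top"
proof -
  have inv: "((\<lambda>t. c / t) \<longlongrightarrow> 0) at_top" for c :: real
    by (intro tendsto_divide_0[OF tendsto_const] filterlim_at_top_imp_at_infinity filterlim_ident)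
  show ?thesis
  proof (rule order_tendstoI)
    fix a assume "a < R_inf"
    moreover have "((\<lambda>t. R_inf + (\<Phi> 1 - R_inf) / t) \<longlongrightarrow> R_inf + 0) at_top"
      by (intro tendsto_add tendsto_const inv)
    ultimately have "eventually (\<lambda>t. a < R_inf + (\<Phi> 1 - R_inf) / t) at_top"
      by (intro order_tendstoD) auto
    moreover have "eventually (\<lambda>t. R_inf + (\<Phi> 1 - R_inf) / t \<le> \<Phi> t / t) at_top"
    proof (rule eventually_at_top_linorderI[of 1])
      fix t :: real assume t: "1 \<le> t"
      have "R_inf * (t - 1) \<le> R t * (t - 1)"
        using R_inf_le_R[of t] t by (intro mult_right_mono) auto
      also have "\<dots> \<le> \<Phi> t - \<Phi> 1" using \<Phi>_increment_bounds(1)[of 1 t] t by simp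
      finally have "(R_inf * (t - 1) + \<Phi> 1) / t \<le> \<Phi> t / t"
        using t by (intro divide_right_mono) auto
      moreover have "(R_inf * (t - 1) + \<Phi> 1) / t = R_inf + (\<Phi> 1 - R_inf) / t"
        using t by (simp add: field_simps)
      ultimately show "R_inf + (\<Phi> 1 - R_inf) / t \<le> \<Phi> t / t" by simp
    qed
    ultimately show "eventually (\<lambda>t. a < \<Phi> t / t) at_top"
      by eventually_elim auto
  next
    fix a assume "R_inf < a"
    then obtain T where T: "T > 0" "R T < a" by (rule R_less_if_R_inf_less)
    have "((\<lambda>t. R T + (\<Phi> T - R T * T) / t) \<longlongrightarrow> R T + 0) at_top"
      by (intro tendsto_add tendsto_const inv)
    then have "eventually (\<lambda>t. R T + (\<Phi> T - R T * T) / t < a) at_top"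
      using T by (intro order_tendstoD) auto
    moreover have "eventually (\<lambda>t. \<Phi> t / t \<le> R T + (\<Phi> T - R T * T) / t) at_top"
    proof (rule eventually_at_top_linorderI[of T])
      fix t assume t: "T \<le> t"
      then have "\<Phi> t - \<Phi> T \<le> R T * (t - T)" using \<Phi>_increment_bounds(2) T by auto
      then show "\<Phi> t / t \<le> R T + (\<Phi> T - R T * T) / t" using T t by (simp add: field_simps)
    qed
    ultimately show "eventually (\<lambda>t. \<Phi> t / t < a) at_top" by eventually_elim auto
  qed
qed

end

section \<open>Asymptotic profiles\<close>

lemma powr_eq_powr_iff_base:
  fixes x y e :: real
  assumes "x > 0" "y > 0" "e \<noteq> 0"
  shows "x powr e = y powr e \<longleftrightarrow> x = y"
proof
  assume "x powr e = y powr e"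
  then have "(x powr e) powr (1 / e) = (y powr e) powr (1 / e)" by simp
  then show "x = y" using assms by (simp add: powr_powr)
qed simp

locale normalized_gradient_flow = nonvanishing_gradient_flow +
  fixes l :: real
  assumes lambda1_eq: "lambda1 p J = ereal l" and l_pos: "l > 0" and p_ge_2: "p \<ge> 2"
    and u0_orthogonal: "\<forall>n\<in>null_set J. inner (u 0) n = 0"
begin

definition lam :: real where "lam = l * norm (u 0) powr (p - 2)"

definition w :: "real \<Rightarrow> 'a" where "w t = (1 / profile_a p lam t) *\<^sub>R u t"

lemma u_orthogonal: "0 \<le> t \<Longrightarrow> \<forall>n\<in>null_set J. inner (u t) n = 0"
  using inner_u_null_set u0_orthogonal by simp

lemma u_in_H0: "0 \<le> t \<Longrightarrow> u t \<in> H0 J"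
  using u_orthogonal u_nonzero by (simp add: H0_def)

lemma l_le_R: "t > 0 \<Longrightarrow> l \<le> R t"
  using lambda1_le_Rq[OF lambda1_eq u_in_H0 J_u_finite] by (simp add: R_def)

lemma l_le_R_inf: "l \<le> R_inf"
  unfolding R_inf_def using l_le_R by (intro cInf_greatest) (auto simp: gt_ex)

lemma lam_pos: "lam > 0"
  using l_pos u_nonzero[of 0] by (simp add: lam_def)

lemma profile_a_pos:
  assumes "0 \<le> t" shows "profile_a p lam t > 0"
proof -
  have "1 + (p - 2) * lam * t > 0" using lam_pos p_ge_2 assms by (simp add: add_pos_nonneg)
  then show ?thesis by (simp add: profile_a_def)
qed

lemma norm_w: "0 \<le> t \<Longrightarrow> norm (w t) = norm (u t) / profile_a p lam t"
  using profile_a_pos[of t] by (simp add: w_def)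

lemma norm_w_pos: "0 \<le> t \<Longrightarrow> norm (w t) > 0"
  using profile_a_pos[of t] u_nonzero[of t] by (simp add: norm_w)

lemma norm_w_powr:
  assumes p: "p > 2" and t: "0 \<le> t"
  shows "norm (w t) powr (2 - p) = (p - 2) * \<Phi> t / (1 + (p - 2) * lam * t)"
proof -
  define \<tau> where "\<tau> = 1 + (p - 2) * lam * t"
  have \<tau>: "\<tau> > 0" using lam_pos p t by (simp add: \<tau>_def add_pos_nonneg)
  have "profile_a p lam t powr (2 - p) = \<tau> powr (- 1 / (p - 2) * (2 - p))"
    using p by (simp add: profile_a_def \<tau>_def powr_powr)
  also have "- 1 / (p - 2) * (2 - p) = 1" using p by (simp add: field_simps)
  finally have "profile_a p lam t powr (2 - p) = \<tau>" using \<tau> by simp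
  moreover have "norm (u t) powr (2 - p) = (p - 2) * \<Phi> t" using p by (simp add: \<Phi>_def)
  ultimately show ?thesis
    using profile_a_pos[OF t] by (simp add: norm_w[OF t] powr_divide \<tau>_def)
qed

lemma norm_w_tendsto:
  assumes p: "p > 2"
  shows "((\<lambda>t. norm (w t)) \<longlongrightarrow> (R_inf / lam) powr (1 / (2 - p))) at_top"
proof -
  have "((\<lambda>t. (p - 2) * (\<Phi> t / t) / (1 / t + (p - 2) * lam)) \<longlongrightarrow>
      (p - 2) * R_inf / (0 + (p - 2) * lam)) at_top"
    using p lam_pos by (intro tendsto_intros \<Phi>_over_t_tendsto filterlim_at_top_imp_at_infinity
        filterlim_ident tendsto_divide_0[OF tendsto_const]) auto
  moreover have "(p - 2) * (\<Phi> t / t) / (1 / t + (p - 2) * lam) = norm (w t) powr (2 - p)"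
    if "t > 0" for t
  proof -
    have "1 / t + (p - 2) * lam = (1 + (p - 2) * lam * t) / t" using that by (simp add: field_simps)
    then show ?thesis using that p by (simp add: norm_w_powr)
  qed
  then have "eventually (\<lambda>t. (p - 2) * (\<Phi> t / t) / (1 / t + (p - 2) * lam) =
      norm (w t) powr (2 - p)) at_top"
    by (intro eventually_at_top_linorderI[of 1]) auto
  ultimately have "((\<lambda>t. norm (w t) powr (2 - p)) \<longlongrightarrow> R_inf / lam) at_top"
    using p by (auto intro: Lim_transform_eventually)
  then have "((\<lambda>t. (norm (w t) powr (2 - p)) powr (1 / (2 - p))) \<longlongrightarrow> (R_inf / lam) powr (1 / (2 - p)))
      at_top"
    using l_le_R_inf l_pos lam_pos by (intro tendsto_powr tendsto_const) auto
  moreover have "eventually (\<lambda>t. (norm (w t) powr (2 - p)) powr (1 / (2 - p)) = norm (w t)) at_top"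
    using p norm_w_pos by (intro eventually_at_top_linorderI[of 0]) (simp add: powr_powr)
  ultimately show ?thesis by (rule Lim_transform_eventually)
qed

lemma norm_u0_eq:
  assumes p: "p > 2"
  shows "norm (u 0) = (l / lam) powr (1 / (2 - p))"
proof -
  have "l / lam = norm (u 0) powr (2 - p)"
    using l_pos u_nonzero[of 0] by (simp add: lam_def powr_diff powr_minus_divide field_simps)
  then show ?thesis using p u_nonzero[of 0] by (simp add: powr_powr)
qed

lemma ln_norm_w_over_t_tendsto:
  assumes p: "p = 2"
  shows "((\<lambda>t. ln (norm (w t)) / t) \<longlongrightarrow> l - R_inf) at_top"
proof -
  have "ln (norm (w t)) / t = l - \<Phi> t / t" if "t > 0" for t
  proof -
    have "lam = l" unfolding lam_def using p u_nonzero[of 0] by simp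
    then have "profile_a p lam t = exp (- l * t)" unfolding profile_a_def using p by simp
    then have "norm (w t) = exp (l * t) * norm (u t)"
      using norm_w[of t] that by (simp add: exp_minus divide_inverse)
    moreover have "\<Phi> t = - ln (norm (u t))" unfolding \<Phi>_def using p by simp
    ultimately show ?thesis
      using that u_nonzero[of t] by (simp add: ln_mult field_simps)
  qed
  then have "eventually (\<lambda>t. l - \<Phi> t / t = ln (norm (w t)) / t) at_top"
    by (intro eventually_at_top_linorderI[of 1]) auto
  moreover have "((\<lambda>t. l - \<Phi> t / t) \<longlongrightarrow> l - R_inf) at_top"
    by (intro tendsto_intros \<Phi>_over_t_tendsto)
  ultimately show ?thesis by (rule Lim_transform_eventually[rotated])
qed


lemma inner_\<zeta>_minus_ground_level_nonneg:
  assumes "r > 0" "J v \<noteq> \<infinity>" "Jr v = l * norm v powr p / p"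
  shows "0 \<le> inner (\<zeta> r - (l * norm v powr (p - 2)) *\<^sub>R v) (u r - v)"
proof -
  have "Jr v + inner ((l * norm v powr (p - 2)) *\<^sub>R v) (u r - v) \<le> Jr (u r)"
    using assms l_pos
    by (intro ground_level_subgradient_ineq[OF lambda1_eq] u_orthogonal J_u_finite) auto
  moreover have "Jr (u r) + inner (\<zeta> r) (v - u r) \<le> Jr v"
    by (rule subdiff_ineq[OF \<zeta>_subdiff[OF assms(1)] assms(2)])
  ultimately show ?thesis by (simp add: inner_diff_left inner_diff_right)
qed

lemma norm_diff_separable_solution_le:
  assumes p: "p > 2" and t: "t > 0" and s: "s \<ge> 0"
    and h: "J h \<noteq> \<infinity>" "Jr h = l * norm h powr p / p"
  shows "norm (u (t + s) - (1 + (p - 2) * l * norm h powr (p - 2) * s) powr (- 1 / (p - 2)) *\<^sub>R h)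
    \<le> norm (u t - h)"
proof -
  define v where "v = (\<lambda>r. (1 + (p - 2) * l * norm h powr (p - 2) * r) powr (- 1 / (p - 2)) *\<^sub>R h)"
  have v_deriv: "(v has_vector_derivative - ((l * norm (v r) powr (p - 2)) *\<^sub>R v r)) (at r)"
    if "r \<ge> 0" for r
    using p l_pos that
    by (intro separable_curve_has_vector_derivative[OF v_def]) (auto intro: add_pos_nonneg)
  have "norm (u (s + t) - v s) \<le> norm (u (0 + t) - v 0)"
  proof (rule norm_diff_le_if_monotone_velocities[where \<xi> = "\<lambda>r. \<zeta> (r + t)"
        and \<eta> = "\<lambda>r. (l * norm (v r) powr (p - 2)) *\<^sub>R v r"])
    show "continuous_on {0..s} (\<lambda>r. u (r + t))"
      using t by (intro continuous_on_compose2[OF u_cont]) (auto intro!: continuous_intros)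
    show "continuous_on {0..s} v"
      using v_deriv
      by (intro continuous_at_imp_continuous_on ballI has_vector_derivative_continuous) auto
    fix r assume r: "0 < r" "r < s"
    show "((\<lambda>r. u (r + t)) has_vector_derivative - \<zeta> (r + t)) (at_right r)"
      using r t by (intro has_vector_derivative_at_right_shift u_deriv) auto
    show "(v has_vector_derivative - ((l * norm (v r) powr (p - 2)) *\<^sub>R v r)) (at_right r)"
      using v_deriv[of r] r by (auto intro: has_vector_derivative_at_within)
    show "0 \<le> inner (\<zeta> (r + t) - (l * norm (v r) powr (p - 2)) *\<^sub>R v r) (u (r + t) - v r)"
      using r t h unfolding v_def
      by (intro inner_\<zeta>_minus_ground_level_nonneg J_scaleR_finite Jr_scaleR_ground_level) auto
  qed (use s in auto)
  then show ?thesis by (simp add: v_def add.commute)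
qed


lemma u_eq_profile_a_scaleR_w: "0 \<le> t \<Longrightarrow> u t = profile_a p lam t *\<^sub>R w t"
  using profile_a_pos[of t] by (simp add: w_def)

text \<open>With \<open>h = a(t) g\<close> and \<open>s = 1 + (p - 2) \<lambda> t = a(t)\<^bsup>2-p\<^esup>\<close>, the separable solution through \<open>h\<close> at
  time \<open>s\<close> is again a fixed multiple of \<open>a(t) g\<close>, and \<open>a(t + s)\<close> a fixed multiple of \<open>a(t)\<close>.\<close>

lemma norm_diff_rescaled_separable_le:
  assumes p: "p > 2" and t: "t > 0" and g: "J g \<noteq> \<infinity>" "Jr g = l * norm g powr p / p"
  shows "norm ((1 + (p - 2) * lam) powr (- 1 / (p - 2)) *\<^sub>R w (t + (1 + (p - 2) * lam * t))
      - (1 + (p - 2) * l * norm g powr (p - 2)) powr (- 1 / (p - 2)) *\<^sub>R g) \<le> norm (w t - g)"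
proof -
  define c where "c = p - 2"
  define \<tau> where "\<tau> = 1 + c * lam * t"
  define a where "a = profile_a p lam t"
  have c: "c > 0" using p by (simp add: c_def)
  have \<tau>: "\<tau> > 0" using c lam_pos t by (simp add: \<tau>_def add_pos_nonneg)
  have a_eq: "a = \<tau> powr (- 1 / c)" using p by (simp add: a_def profile_a_def \<tau>_def c_def)
  have a: "a > 0" using \<tau> by (simp add: a_eq)
  have "profile_a p lam (t + \<tau>) = (\<tau> * (1 + c * lam)) powr (- 1 / c)"
    using p by (simp add: profile_a_def \<tau>_def c_def algebra_simps)
  then have a_later: "profile_a p lam (t + \<tau>) = a * (1 + c * lam) powr (- 1 / c)"
    using \<tau> c lam_pos by (simp add: a_eq powr_mult)
  have "a powr c = \<tau> powr (- 1)" using c by (simp add: a_eq powr_powr)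
  then have "norm (a *\<^sub>R g) powr c * \<tau> = norm g powr c"
    using a \<tau> by (simp add: powr_mult powr_minus_divide)
  then have sep: "(1 + c * l * norm (a *\<^sub>R g) powr c * \<tau>) powr (- 1 / c)
      = (1 + c * l * norm g powr c) powr (- 1 / c)"
    by (simp add: mult.assoc)
  have "norm (u (t + \<tau>) - (1 + c * l * norm (a *\<^sub>R g) powr c * \<tau>) powr (- 1 / c) *\<^sub>R (a *\<^sub>R g))
      \<le> norm (u t - a *\<^sub>R g)"
    unfolding c_def using \<tau>
    by (intro norm_diff_separable_solution_le[OF p t _ J_scaleR_finite[OF g(1)]
          Jr_scaleR_ground_level[OF g(2)]]) auto
  moreover have "u (t + \<tau>) - (1 + c * l * norm g powr c) powr (- 1 / c) *\<^sub>R (a *\<^sub>R g) =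
      a *\<^sub>R ((1 + c * lam) powr (- 1 / c) *\<^sub>R w (t + \<tau>)
        - (1 + c * l * norm g powr c) powr (- 1 / c) *\<^sub>R g)"
    using t \<tau> by (simp add: u_eq_profile_a_scaleR_w a_later scaleR_diff_right)
  moreover have "u t - a *\<^sub>R g = a *\<^sub>R (w t - g)"
    using t by (simp add: u_eq_profile_a_scaleR_w a_def scaleR_diff_right)
  ultimately have "norm (a *\<^sub>R ((1 + c * lam) powr (- 1 / c) *\<^sub>R w (t + \<tau>)
      - (1 + c * l * norm g powr c) powr (- 1 / c) *\<^sub>R g)) \<le> norm (a *\<^sub>R (w t - g))"
    unfolding sep by simp
  then show ?thesis using a by (simp add: c_def \<tau>_def)
qed

end

locale asymptotic_profile = normalized_gradient_flow +
  fixes tk :: "nat \<Rightarrow> real" and w_star :: 'a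
  assumes tk_at_top: "filterlim tk at_top sequentially" and w_tk: "(\<lambda>k. w (tk k)) \<longlonglongrightarrow> w_star"
begin

lemma eventually_tk_ge: "eventually (\<lambda>k. c \<le> tk k) sequentially"
  using tk_at_top by (simp add: filterlim_at_top)

lemma w_star_orthogonal: "\<forall>n\<in>null_set J. inner w_star n = 0"
proof
  fix n assume n: "n \<in> null_set J"
  have "eventually (\<lambda>k. w (tk k) \<in> {x. inner x n = 0}) sequentially"
    using eventually_tk_ge[of 0] by eventually_elim (use n u_orthogonal in \<open>simp add: w_def\<close>)
  then have "w_star \<in> {x. inner x n = 0}"
    by (intro Lim_in_closed_set[OF _ _ _ w_tk] closed_Collect_eq continuous_intros) auto
  then show "inner w_star n = 0" by simp
qed

lemma ground_state_if_R_inf_eq: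
  assumes "R_inf = l" "w_star \<noteq> 0"
  shows "ground_state p J w_star"
proof (rule ground_state_if_Rq_tendsto[OF lambda1_eq w_tk])
  show "w_star \<in> H0 J" using assms(2) w_star_orthogonal by (simp add: H0_def)
  show "eventually (\<lambda>k. J (w (tk k)) \<noteq> \<infinity>) sequentially"
    using eventually_tk_ge[of 1] by eventually_elim (simp add: w_def J_scaleR_finite J_u_finite)
  have "eventually (\<lambda>k. R (tk k) = Rq (w (tk k))) sequentially"
  proof (rule eventually_mono[OF eventually_tk_ge[of 0]])
    fix k assume "0 \<le> tk k"
    then have "profile_a p lam (tk k) > 0" by (rule profile_a_pos)
    then show "R (tk k) = Rq (w (tk k))" by (simp add: R_def w_def Rq_scaleR)
  qed
  moreover have "(\<lambda>k. R (tk k)) \<longlonglongrightarrow> l"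
    using filterlim_compose[OF R_tendsto_R_inf tk_at_top] assms(1) by simp
  ultimately show "(\<lambda>k. Rq (w (tk k))) \<longlonglongrightarrow> l" by (rule Lim_transform_eventually[rotated])
qed

lemma R_inf_eq_if_p_eq_2:
  assumes "p = 2" "w_star \<noteq> 0"
  shows "R_inf = l"
proof -
  have "(\<lambda>k. ln (norm (w (tk k)))) \<longlonglongrightarrow> ln (norm w_star)"
    using assms(2) by (intro tendsto_intros w_tk) auto
  then have "(\<lambda>k. ln (norm (w (tk k))) / tk k) \<longlonglongrightarrow> 0"
    by (rule tendsto_divide_0[OF _ filterlim_at_top_imp_at_infinity[OF tk_at_top]])
  moreover have "(\<lambda>k. ln (norm (w (tk k))) / tk k) \<longlonglongrightarrow> l - R_inf"
    by (rule filterlim_compose[OF ln_norm_w_over_t_tendsto[OF assms(1)] tk_at_top])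
  ultimately show ?thesis using LIMSEQ_unique by fastforce
qed

lemma norm_w_star_eq:
  assumes "p > 2"
  shows "norm w_star = (R_inf / lam) powr (1 / (2 - p))"
  using tendsto_norm[OF w_tk] filterlim_compose[OF norm_w_tendsto[OF assms] tk_at_top]
  by (rule LIMSEQ_unique)

lemma shifted_times_at_top: "filterlim (\<lambda>k. tk k + (1 + (p - 2) * lam * tk k)) at_top sequentially"
proof -
  have "filterlim (\<lambda>k. 1 + (1 + (p - 2) * lam) * tk k) at_top sequentially"
    using p_ge_2 lam_pos by (intro filterlim_tendsto_add_at_top[OF tendsto_const]
        filterlim_tendsto_pos_mult_at_top[OF tendsto_const _ tk_at_top]) (auto intro: add_pos_nonneg)
  moreover have "(\<lambda>k. 1 + (1 + (p - 2) * lam) * tk k) = (\<lambda>k. tk k + (1 + (p - 2) * lam * tk k))"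
    by (simp add: fun_eq_iff algebra_simps)
  ultimately show ?thesis by simp
qed

lemma rescaled_w_tendsto_if_ground_state:
  assumes p: "p > 2" and gs: "ground_state p J w_star"
  shows "(\<lambda>k. (1 + (p - 2) * lam) powr (- 1 / (p - 2)) *\<^sub>R w (tk k + (1 + (p - 2) * lam * tk k)))
    \<longlonglongrightarrow> (1 + (p - 2) * l * norm w_star powr (p - 2)) powr (- 1 / (p - 2)) *\<^sub>R w_star"
proof -
  have g: "J w_star \<noteq> \<infinity>" "Jr w_star = l * norm w_star powr p / p"
    using ground_stateD[OF gs lambda1_eq] by auto
  have "eventually (\<lambda>k. norm ((1 + (p - 2) * lam) powr (- 1 / (p - 2)) *\<^sub>R
      w (tk k + (1 + (p - 2) * lam * tk k)) - (1 + (p - 2) * l * norm w_star powr (p - 2))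
      powr (- 1 / (p - 2)) *\<^sub>R w_star) \<le> norm (w (tk k) - w_star)) sequentially"
    using eventually_tk_ge[of 1]
    by eventually_elim (rule norm_diff_rescaled_separable_le[OF p _ g], simp)
  moreover have "(\<lambda>k. norm (w (tk k) - w_star)) \<longlonglongrightarrow> 0"
    using w_tk by (simp add: tendsto_norm_zero_iff LIM_zero_iff)
  ultimately have "(\<lambda>k. (1 + (p - 2) * lam) powr (- 1 / (p - 2)) *\<^sub>R
      w (tk k + (1 + (p - 2) * lam * tk k)) - (1 + (p - 2) * l * norm w_star powr (p - 2))
      powr (- 1 / (p - 2)) *\<^sub>R w_star) \<longlonglongrightarrow> 0"
    by (rule Lim_null_comparison)
  then show ?thesis by (simp add: LIM_zero_iff)
qed

text \<open>By comparison with the separable solution through the ground state \<open>w\<^sub>*\<close>, the rescaled flow at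
  the times \<open>t\<^sub>k + 1 + (p - 2) \<lambda> t\<^sub>k\<close> tends to a multiple of \<open>w\<^sub>*\<close>; the size of that multiple is
  consistent with the norm limit of \<open>w\<close> only if \<open>\<lambda> = \<lambda>\<^sub>1 \<parallel>w\<^sub>*\<parallel>\<^bsup>p-2\<^esup>\<close>.\<close>

lemma norm_w_star_eq_if_ground_state:
  assumes p: "p > 2" and gs: "ground_state p J w_star"
  shows "norm w_star = norm (u 0)"
proof -
  define c where "c = p - 2"
  define \<kappa> where "\<kappa> = (1 + c * lam) powr (- 1 / c)"
  define \<kappa>' where "\<kappa>' = (1 + c * l * norm w_star powr c) powr (- 1 / c)"
  have c: "c > 0" using p by (simp add: c_def)
  have "1 + c * lam > 0" "1 + c * l * norm w_star powr c > 0"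
    using c lam_pos l_pos by (auto intro!: add_pos_nonneg)
  then have \<kappa>_pos: "\<kappa> > 0" and \<kappa>'_pos: "\<kappa>' > 0" by (simp_all add: \<kappa>_def \<kappa>'_def)
  have "w_star \<noteq> 0" using ground_stateD(1)[OF gs lambda1_eq] by (simp add: H0_def)
  define s where "s k = tk k + (1 + c * lam * tk k)" for k
  have "(\<lambda>k. norm (\<kappa> *\<^sub>R w (s k))) \<longlonglongrightarrow> norm (\<kappa>' *\<^sub>R w_star)"
    using rescaled_w_tendsto_if_ground_state[OF p gs]
    unfolding \<kappa>_def \<kappa>'_def s_def c_def by (rule tendsto_norm)
  then have "(\<lambda>k. norm (\<kappa> *\<^sub>R w (s k))) \<longlonglongrightarrow> \<kappa>' * norm w_star" using \<kappa>'_pos by simp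
  moreover have "(\<lambda>k. norm (w (s k))) \<longlonglongrightarrow> norm w_star"
    using filterlim_compose[OF norm_w_tendsto[OF p] shifted_times_at_top] norm_w_star_eq[OF p]
    by (simp add: s_def c_def)
  then have "(\<lambda>k. norm (\<kappa> *\<^sub>R w (s k))) \<longlonglongrightarrow> \<kappa> * norm w_star"
    using \<kappa>_pos by (simp add: tendsto_mult_left)
  ultimately have "\<kappa>' * norm w_star = \<kappa> * norm w_star" by (rule LIMSEQ_unique)
  then have "\<kappa> = \<kappa>'" using \<open>w_star \<noteq> 0\<close> by simp
  then have "1 + c * lam = 1 + c * l * norm w_star powr c"
    using c lam_pos l_pos unfolding \<kappa>_def \<kappa>'_def
    by (subst (asm) powr_eq_powr_iff_base) (auto intro: add_pos_nonneg)
  then have "norm (u 0) powr c = norm w_star powr c"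
    using c l_pos by (simp add: lam_def c_def)
  then show ?thesis
    using c \<open>w_star \<noteq> 0\<close> u_nonzero[of 0] by (simp add: powr_eq_powr_iff_base)
qed

lemma characterization:
  "(p = 2 \<longrightarrow> ground_state p J w_star \<or> w_star = 0) \<and>
   (p > 2 \<longrightarrow> norm w_star \<le> norm (u 0) \<and> (norm w_star = norm (u 0) \<longleftrightarrow> ground_state p J w_star))"
proof (intro conjI impI)
  assume "p = 2"
  then show "ground_state p J w_star \<or> w_star = 0"
    using ground_state_if_R_inf_eq R_inf_eq_if_p_eq_2 by blast
next
  assume p: "p > 2"
  have pos: "R_inf / lam > 0" "l / lam > 0" using l_le_R_inf l_pos lam_pos by auto
  have "1 / (2 - p) < 0" using p by simp
  then show "norm w_star \<le> norm (u 0)"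
    unfolding norm_w_star_eq[OF p] norm_u0_eq[OF p]
    using pos l_le_R_inf lam_pos by (intro powr_mono2') (auto intro: divide_right_mono)
  show "norm w_star = norm (u 0) \<longleftrightarrow> ground_state p J w_star"
  proof
    assume "norm w_star = norm (u 0)"
    then have "R_inf / lam = l / lam"
      using p pos unfolding norm_w_star_eq[OF p] norm_u0_eq[OF p]
      by (subst (asm) powr_eq_powr_iff_base) auto
    then show "ground_state p J w_star"
      using lam_pos u_nonzero[of 0] \<open>norm w_star = norm (u 0)\<close>
      by (intro ground_state_if_R_inf_eq) auto
  qed (rule norm_w_star_eq_if_ground_state[OF p])
qed

end

theorem proposition7:
  fixes J :: "'a::{real_inner, complete_space} \<Rightarrow> ereal"
    and p :: real and f w_star :: 'a and u :: "real \<Rightarrow> 'a"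
  assumes p: "p \<ge> 2"
    and proper: "proper_fun J" and conv: "convex_fun J" and lsc: "lsc_fun J"
    and dense: "closure (eff_dom J) = UNIV"
    and hom: "abs_homogeneous p J"
    and coercive: "lambda1 p J > 0"
    and f: "f \<in> H0 J"
    and flow: "gradient_flow J f u"
    and profile: "\<exists>tk :: nat \<Rightarrow> real. filterlim tk at_top sequentially \<and>
        ((\<lambda>k. (1 / profile_a p (real_of_ereal (lambda1 p J) * norm f powr (p - 2)) (tk k)) *\<^sub>R u (tk k))
          \<longlonglongrightarrow> w_star)"
  shows "(p = 2 \<longrightarrow> (ground_state p J w_star \<or> w_star = 0)) \<and>
         (p > 2 \<longrightarrow> norm w_star \<le> norm f \<and> (norm w_star = norm f \<longleftrightarrow> ground_state p J w_star))"
proof -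
  \<comment> \<open>\<open>dense\<close> is only needed for the existence of the flow, which is assumed here.\<close>
  obtain \<zeta> where \<zeta>: "\<And>t. t > 0 \<Longrightarrow>
      min_norm_subgrad J (u t) (\<zeta> t) \<and> (u has_vector_derivative - \<zeta> t) (at_right t)"
    using flow unfolding gradient_flow_def by metis
  interpret gradient_flow_trajectory J p u \<zeta>
    using p proper conv lsc hom flow \<zeta> by unfold_locales (auto simp: gradient_flow_def)
  have u0: "u 0 = f" and f_orth: "\<forall>n\<in>null_set J. inner f n = 0" and "f \<noteq> 0"
    using flow f by (auto simp: gradient_flow_def H0_def)
  obtain tk where tk: "filterlim tk at_top sequentially" and lim:
    "(\<lambda>k. (1 / profile_a p (real_of_ereal (lambda1 p J) * norm f powr (p - 2)) (tk k)) *\<^sub>R u (tk k))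
      \<longlonglongrightarrow> w_star"
    using profile by blast
  show ?thesis
  proof (cases "\<exists>T\<ge>0. u T = 0")
    case True
    then obtain T where "0 \<le> T" "u T = 0" by blast
    then have "w_star = 0" by (rule tendsto_0_if_extinct[OF _ _ tk lim])
    then show ?thesis using \<open>f \<noteq> 0\<close> by (auto simp: ground_state_def H0_def)
  next
    case False
    then interpret nonvanishing_gradient_flow J p u \<zeta> by unfold_locales auto
    obtain l where l: "lambda1 p J = ereal l"
      using coercive lambda1_less_infinity f_orth u0 by (cases "lambda1 p J") auto
    interpret normalized_gradient_flow J p u \<zeta> l
      using l coercive p u0 f_orth by unfold_locales auto
    interpret asymptotic_profile J p u \<zeta> l tk w_star
      using l u0 tk lim by unfold_locales (simp_all add: w_def lam_def)
    show ?thesis using characterization u0 by simp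
  qed
qed

end
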